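(* Consider an ergodic Jackson network process $\mathbf{X}$ (setting in the context) with stationary distribution $\xi(\mathbf{n})=\prod_{j=1}^{J}\prod_{k=1}^{n_j}\frac{\eta_j}{\mu_j(k)}C(j)^{-1}$. Let $\boldsymbol{\gamma}=(\gamma_j:j\in\overline{J})\in[0,\infty)^{\overline{J}}$, $\|\boldsymbol{\gamma}\|_\infty=\max_j\gamma_j$, and define $\alpha_0=1$, $\alpha_j=\gamma_j$ for $j\in\overline{J}$ if $\|\boldsymbol{\gamma}\|_\infty\le1$ and $\alpha_j=\gamma_j/\|\boldsymbol{\gamma}\|_\infty$ if $\|\boldsymbol{\gamma}\|_\infty>1$; define $\beta=1$ if $\|\boldsymbol{\gamma}\|_\infty\le1$ and $\beta=\|\boldsymbol{\gamma}\|_\infty$ otherwise. Let $r^{(\boldsymbol{\alpha})}=(I-rI_{(1-\boldsymbol{\alpha})})^{-1}rI_{\boldsymbol{\alpha}}$ be the randomized-skipping modification of the extended routing matrix $r$ with $\boldsymbol{\alpha}=(\alpha_j:j\in\overline{J}_0)$. Let $\mathbf{X}^{(\boldsymbol{\gamma})}$ be the continuous-time Markov chain on $\mathbb{N}_0^{\overline{J}}$ whose positive transition rates are $q(\mathbf{n},\mathbf{n}+\mathbf{e}_i)=\beta\lambda r^{(\boldsymbol{\alpha})}(0,i)$ for $i\in\overline{J}$, $q(\mathbf{n},\mathbf{n}-\mathbf{e}_j+\mathbf{e}_i)=1_{[n_j>0]}\gamma_j\mu_j(n_j)r^{(\boldsymbol{\alpha})}(j,i)$ for $i,j\in\overline{J}$,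 $i\ne j$, and $q(\mathbf{n},\mathbf{n}-\mathbf{e}_j)=1_{[n_j>0]}\gamma_j\mu_j(n_j)r^{(\boldsymbol{\alpha})}(j,0)$ for $j\in\overline{J}$. Let $B(\boldsymbol{\gamma})=\{j\in\overline{J}:\gamma_j=0\}$ and $W(\boldsymbol{\gamma})=\overline{J}\setminus B(\boldsymbol{\gamma})$. Then $\xi$ is a stationary distribution of $\mathbf{X}^{(\boldsymbol{\gamma})}$. If $B(\boldsymbol{\gamma})=\emptyset$, then $\mathbf{X}^{(\boldsymbol{\gamma})}$ is ergodic. If $B(\boldsymbol{\gamma})\neq\emptyset$, then $\mathbf{X}^{(\boldsymbol{\gamma})}$ is not irreducible on $\mathbb{N}_0^{\overline{J}}$, its state space splits into the infinitely many closed subspaces $\mathbb{N}_0^{W(\boldsymbol{\gamma})}\times\{(n_j:j\in B(\boldsymbol{\gamma}))\}$, and for every probability distribution $\varphi$ on $\mathbb{N}_0^{B(\boldsymbol{\gamma})}$ the distribution \[ \xi^{(\boldsymbol{\gamma})}_\varphi(\mathbf{n})=\prod_{j\in W(\boldsymbol{\gamma})}\prod_{k=1}^{n_j}\frac{\eta_j}{\mu_j(k)}C(j)^{-1}\cdot\varphi(n_j:j\in B(\boldsymbol{\gamma})),\qquad \mathbf{n}\in\mathbb{N}_0^{\overline{J}}, \] is a stationary distribution of $\mathbf{X}^{(\boldsymbol{\gamma})}$.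
   Context: Jackson network setting: node set $\overline{J}=\{1,\dots,J\}$, extended node set $\overline{J}_0=\{0,1,\dots,J\}$ (0 = external source/sink). External Poisson arrivals at node $j$ with rates $\lambda_j\ge0$, $\lambda=\sum_j\lambda_j>0$; single servers with infinite waiting room, FCFS, service intensity $\mu_j(n_j)>0$ when $n_j>0$ customers are at node $j$. Extended routing matrix $r=(r(i,j):i,j\in\overline{J}_0)$ is stochastic and irreducible with $r(0,j)=\lambda_j/\lambda$, $r(0,0)=0$. $\eta=(\eta_j:j\in\overline{J}_0)$ is the extended traffic solution: $\eta_0=\lambda$ and $\eta_j=\sum_{i\in\overline{J}_0}\eta_i r(i,j)$ for all $j\in\overline{J}_0$. The Jackson network process $\mathbf{X}$ is the Markov chain on $\mathbb{N}_0^{\overline{J}}$ with rates $q(\mathbf{n},\mathbf{n}+\mathbf{e}_i)=\lambda r(0,i)$, $q(\mathbf{n},\mathbf{n}-\mathbf{e}_j+\mathbf{e}_i)=1_{[n_j>0]}\mu_j(n_j)r(j,i)$ ($i\neq j$), $q(\mathbf{n},\mathbf{n}-\mathbf{e}_j)=1_{[n_j>0]}\mu_j(n_j)r(j,0)$; it is assumed ergodic, and $C(j)=\sum_{n\ge0}\prod_{k=1}^n\eta_j/\mu_j(k)<\infty$. $\mathbf{e}_j$ is the $j$-th unit vector. $I_{\boldsymbol{\alpha}}$, $I_{(1-\boldsymbol{\alpha})}$ are diagonal matrices indexed by $\overline{J}_0$ with entries $\alpha_j$, resp. $1-\alpha_j$; $r^{(\boldsymbol{\alpha})}$ is the transition matrix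 of randomized skipping (a proposed next state $j$ drawn from the current row of $r$ is accepted with probability $\alpha_j$; if rejected, a new proposal is drawn from row $j$ of $r$ without time passing, until acceptance). *)

theory Defs
  imports "HOL-Analysis.Analysis"
begin

(* Nodes 1..J are modelled by a finite type 'j; the extended node set {0,1,..,J}
   is 'j option, with None playing the role of the external node 0.
   States of the network are n :: 'j => nat (i.e. N_0^J). *)

definition ctmc_qout :: "'s set \<Rightarrow> ('s \<Rightarrow> 's \<Rightarrow> real) \<Rightarrow> 's \<Rightarrow> real" where
  "ctmc_qout S q n = infsum (\<lambda>m. q n m) (S - {n})"

definition ctmc_stationary :: "'s set \<Rightarrow> ('s \<Rightarrow> 's \<Rightarrow> real) \<Rightarrow> ('s \<Rightarrow> real) \<Rightarrow> bool" where
  "ctmc_stationary S q \<pi> \<longleftrightarrow>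
     (\<forall>n\<in>S. 0 \<le> \<pi> n) \<and> (\<pi> has_sum 1) S \<and>
     (\<forall>n\<in>S. ((\<lambda>m. \<pi> m * q m n) has_sum (\<pi> n * ctmc_qout S q n)) (S - {n}))"

definition ctmc_irreducible :: "'s set \<Rightarrow> ('s \<Rightarrow> 's \<Rightarrow> real) \<Rightarrow> bool" where
  "ctmc_irreducible S q \<longleftrightarrow>
     (\<forall>n\<in>S. \<forall>m\<in>S. (n, m) \<in> {(x, y). x \<in> S \<and> y \<in> S \<and> x \<noteq> y \<and> q x y > 0}\<^sup>*)"

definition ctmc_closed :: "'s set \<Rightarrow> ('s \<Rightarrow> 's \<Rightarrow> real) \<Rightarrow> 's set \<Rightarrow> bool" where
  "ctmc_closed S q A \<longleftrightarrow> A \<subseteq> S \<and> (\<forall>n\<in>A. \<forall>m\<in>S. m \<noteq> n \<and> q n m > 0 \<longrightarrow> m \<in> A)"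

definition ctmc_jump :: "'s set \<Rightarrow> ('s \<Rightarrow> 's \<Rightarrow> real) \<Rightarrow> 's \<Rightarrow> 's \<Rightarrow> real" where
  "ctmc_jump S q x y = (if x = y then 0 else q x y / ctmc_qout S q x)"

fun path_prob :: "('s \<Rightarrow> 's \<Rightarrow> real) \<Rightarrow> 's list \<Rightarrow> real" where
  "path_prob P [] = 1"
| "path_prob P [x] = 1"
| "path_prob P (x # y # xs) = P x y * path_prob P (y # xs)"

definition ctmc_return_prob :: "'s set \<Rightarrow> ('s \<Rightarrow> 's \<Rightarrow> real) \<Rightarrow> 's \<Rightarrow> ennreal" where
  "ctmc_return_prob S q i =
     infsum (\<lambda>xs. ennreal (path_prob (ctmc_jump S q) (i # xs @ [i]))) {xs. set xs \<subseteq> S - {i}}"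

(* expected return time E_i[T_i] on the event of return: path probability times the sum of
   the expected holding times 1/q(x_t) of the states visited before returning *)
definition ctmc_return_time :: "'s set \<Rightarrow> ('s \<Rightarrow> 's \<Rightarrow> real) \<Rightarrow> 's \<Rightarrow> ennreal" where
  "ctmc_return_time S q i =
     infsum (\<lambda>xs. ennreal (path_prob (ctmc_jump S q) (i # xs @ [i]) *
                          sum_list (map (\<lambda>x. 1 / ctmc_qout S q x) (i # xs))))
            {xs. set xs \<subseteq> S - {i}}"

(* positive recurrence (Norris' convention: absorbing states count as positive recurrent) *)
definition ctmc_pos_recurrent :: "'s set \<Rightarrow> ('s \<Rightarrow> 's \<Rightarrow> real) \<Rightarrow> 's \<Rightarrow> bool" where
  "ctmc_pos_recurrent S q i \<longleftrightarrow>
     ctmc_qout S q i = 0 \<or> (ctmc_return_prob S q i = 1 \<and> ctmc_return_time S q i < top)"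

definition ctmc_ergodic :: "'s set \<Rightarrow> ('s \<Rightarrow> 's \<Rightarrow> real) \<Rightarrow> bool" where
  "ctmc_ergodic S q \<longleftrightarrow> ctmc_irreducible S q \<and> (\<forall>i\<in>S. ctmc_pos_recurrent S q i)"

(* a i: external arrival rate to node i; s j k: service rate of node j with k customers;
   p: extended routing matrix indexed by 'j option (None = node 0) *)
definition jackson_rate ::
  "('j::finite \<Rightarrow> real) \<Rightarrow> ('j \<Rightarrow> nat \<Rightarrow> real) \<Rightarrow> real^'j option^'j option
     \<Rightarrow> ('j \<Rightarrow> nat) \<Rightarrow> ('j \<Rightarrow> nat) \<Rightarrow> real" where
  "jackson_rate a s p n m =
     (if m = n then 0 else
        (\<Sum>i\<in>UNIV. if m = n(i := n i + 1) then a i else 0)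
      + (\<Sum>j\<in>UNIV. \<Sum>i\<in>UNIV.
           if i \<noteq> j \<and> n j > 0 \<and> m = (n(j := n j - 1))(i := n i + 1)
           then s j (n j) * p $ Some j $ Some i else 0)
      + (\<Sum>j\<in>UNIV. if n j > 0 \<and> m = n(j := n j - 1) then s j (n j) * p $ Some j $ None else 0))"

definition diag_mat :: "('n::finite \<Rightarrow> real) \<Rightarrow> real^'n^'n" where
  "diag_mat d = (\<chi> i k. if i = k then d i else 0)"

definition skip_matrix :: "real^'n::finite^'n \<Rightarrow> ('n \<Rightarrow> real) \<Rightarrow> real^'n^'n" where
  "skip_matrix r \<alpha> = matrix_inv (mat 1 - r ** diag_mat (\<lambda>i. 1 - \<alpha> i)) ** r ** diag_mat \<alpha>"

definition jackson_C :: "('j option \<Rightarrow> real) \<Rightarrow> ('j \<Rightarrow> nat \<Rightarrow> real) \<Rightarrow> 'j \<Rightarrow> real" where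
  "jackson_C \<eta> \<mu> j = (\<Sum>n. \<Prod>k\<in>{1..n}. \<eta> (Some j) / \<mu> j k)"

definition jackson_factor :: "('j option \<Rightarrow> real) \<Rightarrow> ('j \<Rightarrow> nat \<Rightarrow> real) \<Rightarrow> 'j \<Rightarrow> nat \<Rightarrow> real" where
  "jackson_factor \<eta> \<mu> j k = (\<Prod>l\<in>{1..k}. \<eta> (Some j) / \<mu> j l) / jackson_C \<eta> \<mu> j"

end

theory Submission
  imports Defs
begin

text \<open>
  The modified process is again a Jackson network, with routing matrix \<open>r^(\<alpha>)\<close>, arrival
  rates \<open>\<beta> \<lambda> r^(\<alpha>)(0, i)\<close> and service rates \<open>\<gamma>\<^sub>j \<mu>\<^sub>j\<close>. The matrix \<open>r^(\<alpha>)\<close> is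
  stochastic and \<open>\<beta> \<eta>\<^sub>k \<alpha>\<^sub>k\<close> solves its traffic equations; as \<open>\<beta> \<alpha>\<^sub>j = \<gamma>\<^sub>j\<close>, the
  product form \<open>\<xi>\<close> satisfies the local balance equations of every node, hence global balance.
  A node with \<open>\<gamma>\<^sub>j = 0\<close> never serves and, since \<open>\<alpha>\<^sub>j = 0\<close> kills column \<open>j\<close> of
  \<open>r^(\<alpha>)\<close>, never receives customers: its coordinate is frozen, and any law of the frozen
  coordinates combined with the product form of the others is stationary. If all \<open>\<gamma>\<^sub>j > 0\<close>,
  the new rates dominate a positive multiple of the old ones (\<open>r^(\<alpha>) \<ge> r I\<^sub>\<alpha>\<close>), so
  irreducibility is inherited, and positive recurrence follows from the finite invariant measure
  \<open>\<xi> q\<close> of the jump chain.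
\<close>

section \<open>Transition rates of Jackson type\<close>

lemma has_sum_point_mass:
  assumes "c \<noteq> 0 \<Longrightarrow> t \<in> A"
  shows "((\<lambda>m. if m = t then c else 0) has_sum (c::'b::topological_comm_monoid_add)) A"
proof (cases "c = 0")
  case True
  then have "(\<lambda>m. if m = t then c else 0) = (\<lambda>_. 0)" by auto
  then show ?thesis using True by simp
next
  case False
  then show ?thesis using assms by (intro has_sum_finite_neutralI[where B="{t}"]) auto
qed

lemma has_sum_sum_functions:
  fixes f :: "'i \<Rightarrow> 'a \<Rightarrow> 'b::topological_comm_monoid_add"
  assumes "finite I" "\<And>i. i \<in> I \<Longrightarrow> (f i has_sum s i) A"
  shows "((\<lambda>x. \<Sum>i\<in>I. f i x) has_sum (\<Sum>i\<in>I. s i)) A"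
  using assms by (induction I rule: finite_induct) (auto intro!: has_sum_add)

lemma sum_UNIV_option: "(\<Sum>k\<in>UNIV. g k) = g None + (\<Sum>j\<in>(UNIV::'j::finite set). g (Some j))"
  by (simp add: UNIV_option_conv sum.reindex)

definition jackson_out_rate ::
  "('j::finite \<Rightarrow> real) \<Rightarrow> ('j \<Rightarrow> nat \<Rightarrow> real) \<Rightarrow> real^'j option^'j option \<Rightarrow> ('j \<Rightarrow> nat) \<Rightarrow> real" where
  "jackson_out_rate a s p n =
     (\<Sum>i\<in>UNIV. a i)
   + (\<Sum>j\<in>UNIV. \<Sum>i\<in>UNIV. if i \<noteq> j \<and> n j > 0 then s j (n j) * p$Some j$Some i else 0)
   + (\<Sum>j\<in>UNIV. if n j > 0 then s j (n j) * p$Some j$None else 0)"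

definition jackson_in_flow ::
  "('j::finite \<Rightarrow> real) \<Rightarrow> ('j \<Rightarrow> nat \<Rightarrow> real) \<Rightarrow> real^'j option^'j option \<Rightarrow> (('j \<Rightarrow> nat) \<Rightarrow> real)
     \<Rightarrow> ('j \<Rightarrow> nat) \<Rightarrow> real" where
  "jackson_in_flow a s p \<pi> n =
     (\<Sum>i\<in>UNIV. if n i > 0 then \<pi> (n(i := n i - 1)) * a i else 0)
   + (\<Sum>j\<in>UNIV. \<Sum>i\<in>UNIV. if i \<noteq> j \<and> n i > 0
        then \<pi> ((n(i := n i - 1))(j := n j + 1)) * (s j (n j + 1) * p$Some j$Some i) else 0)
   + (\<Sum>j\<in>UNIV. \<pi> (n(j := n j + 1)) * (s j (n j + 1) * p$Some j$None))"

lemma jackson_rate_has_sum_out: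
  "(jackson_rate a s p n has_sum jackson_out_rate a s p n) (UNIV - {n})"
proof -
  have "((\<lambda>m. (\<Sum>i\<in>UNIV. if m = n(i := n i + 1) then a i else 0)
      + (\<Sum>j\<in>UNIV. \<Sum>i\<in>UNIV. if m = (n(j := n j - 1))(i := n i + 1)
           then (if i \<noteq> j \<and> n j > 0 then s j (n j) * p$Some j$Some i else 0) else 0)
      + (\<Sum>j\<in>UNIV. if m = n(j := n j - 1) then (if n j > 0 then s j (n j) * p$Some j$None else 0) else 0))
     has_sum jackson_out_rate a s p n) (UNIV - {n})"
    unfolding jackson_out_rate_def
    by (intro has_sum_add has_sum_sum_functions finite has_sum_point_mass) (force simp: fun_eq_iff split: if_split_asm)+
  then show ?thesis
    by (rule has_sum_cong[THEN iffD1, rotated]) (auto simp: jackson_rate_def intro!: arg_cong2[where f="(+)"] sum.cong)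
qed

lemma jackson_rate_has_sum_in:
  "((\<lambda>m. \<pi> m * jackson_rate a s p m n) has_sum jackson_in_flow a s p \<pi> n) (UNIV - {n})"
proof -
  have eq: "\<pi> m * jackson_rate a s p m n = 
      (\<Sum>i\<in>UNIV. if m = n(i := n i - 1) then (if n i > 0 then \<pi> (n(i := n i - 1)) * a i else 0) else 0)
      + (\<Sum>j\<in>UNIV. \<Sum>i\<in>UNIV. if m = (n(i := n i - 1))(j := n j + 1) then (if i \<noteq> j \<and> n i > 0
           then \<pi> ((n(i := n i - 1))(j := n j + 1)) * (s j (n j + 1) * p$Some j$Some i) else 0) else 0)
      + (\<Sum>j\<in>UNIV. if m = n(j := n j + 1) then \<pi> (n(j := n j + 1)) * (s j (n j + 1) * p$Some j$None) else 0)"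
    if "m \<noteq> n" for m
  proof -
    have arrival: "\<pi> m * (if n = m(i := m i + 1) then a i else 0)
        = (if m = n(i := n i - 1) then (if n i > 0 then \<pi> (n(i := n i - 1)) * a i else 0) else 0)" for i
    proof -
      have "(n = m(i := m i + 1)) \<longleftrightarrow> (n i > 0 \<and> m = n(i := n i - 1))"
        by (auto simp: fun_eq_iff)
      then show ?thesis by auto
    qed
    have move: "\<pi> m * (if i \<noteq> j \<and> m j > 0 \<and> n = (m(j := m j - 1))(i := m i + 1)
          then s j (m j) * p$Some j$Some i else 0)
        = (if m = (n(i := n i - 1))(j := n j + 1) then (if i \<noteq> j \<and> n i > 0
           then \<pi> ((n(i := n i - 1))(j := n j + 1)) * (s j (n j + 1) * p$Some j$Some i) else 0) else 0)" for i j
    proof -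
      have "(i \<noteq> j \<and> m j > 0 \<and> n = (m(j := m j - 1))(i := m i + 1))
          \<longleftrightarrow> (i \<noteq> j \<and> n i > 0 \<and> m = (n(i := n i - 1))(j := n j + 1))"
        by (auto simp: fun_eq_iff)
      then show ?thesis by auto
    qed
    have departure: "\<pi> m * (if m j > 0 \<and> n = m(j := m j - 1) then s j (m j) * p$Some j$None else 0)
        = (if m = n(j := n j + 1) then \<pi> (n(j := n j + 1)) * (s j (n j + 1) * p$Some j$None) else 0)" for j
    proof -
      have "(m j > 0 \<and> n = m(j := m j - 1)) \<longleftrightarrow> m = n(j := n j + 1)"
        by (auto simp: fun_eq_iff)
      then show ?thesis by auto
    qed
    have "n \<noteq> m" using that by simp
    then show ?thesis
      unfolding jackson_rate_def if_not_P[OF \<open>n \<noteq> m\<close>]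
      by (simp only: sum_distrib_left distrib_left arrival move departure)
  qed
  have "((\<lambda>m. (\<Sum>i\<in>UNIV. if m = n(i := n i - 1) then (if n i > 0 then \<pi> (n(i := n i - 1)) * a i else 0) else 0)
      + (\<Sum>j\<in>UNIV. \<Sum>i\<in>UNIV. if m = (n(i := n i - 1))(j := n j + 1) then (if i \<noteq> j \<and> n i > 0
           then \<pi> ((n(i := n i - 1))(j := n j + 1)) * (s j (n j + 1) * p$Some j$Some i) else 0) else 0)
      + (\<Sum>j\<in>UNIV. if m = n(j := n j + 1) then \<pi> (n(j := n j + 1)) * (s j (n j + 1) * p$Some j$None) else 0))
     has_sum jackson_in_flow a s p \<pi> n) (UNIV - {n})"
    unfolding jackson_in_flow_def
    by (intro has_sum_add has_sum_sum_functions finite has_sum_point_mass) (force simp: fun_eq_iff split: if_split_asm)+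
  then show ?thesis
    by (rule has_sum_cong[THEN iffD1, rotated]) (simp add: eq)
qed

lemma sum_if_neq:
  fixes g :: "'j::finite \<Rightarrow> 'a::ab_group_add"
  shows "(\<Sum>j\<in>UNIV. if j \<noteq> i then g j else 0) = (\<Sum>j\<in>UNIV. g j) - g i"
proof -
  have "{j. j \<noteq> i} = UNIV - {i}" by auto
  then show ?thesis by (simp add: sum.If_cases sum_diff1)
qed

lemma scaled_balance:
  fixes x s t y c :: real
  assumes "x * s = t * y"
  shows "x * (s * c) = y * (t * c)"
proof -
  have "x * (s * c) = (x * s) * c" by (rule mult.assoc[symmetric])
  also have "\<dots> = (t * y) * c" by (simp only: assms)
  finally show ?thesis by (simp add: mult_ac)
qed

context
  fixes a :: "'j::finite \<Rightarrow> real" and s :: "'j \<Rightarrow> nat \<Rightarrow> real"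
    and p :: "real^'j option^'j option" and \<pi> :: "('j \<Rightarrow> nat) \<Rightarrow> real" and \<theta> :: "'j option \<Rightarrow> real"
  assumes local_balance: "\<And>n j. \<pi> (n(j := n j + 1)) * s j (n j + 1) = \<theta> (Some j) * \<pi> n"
    and arrivals: "\<And>i. a i = \<theta> None * p$None$Some i"
    and traffic: "\<And>k. \<theta> k = (\<Sum>i\<in>UNIV. \<theta> i * p$i$k)"
    and stochastic: "\<And>k. (\<Sum>l\<in>UNIV. p$k$l) = 1"
begin

lemma jackson_departure_balance:
  "(\<Sum>j\<in>UNIV. \<pi> (n(j := n j + 1)) * (s j (n j + 1) * p$Some j$None)) = \<pi> n * (\<Sum>i\<in>UNIV. a i)"
proof -
  have row: "(\<Sum>i\<in>UNIV. p$None$Some i) = 1 - p$None$None"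
    using stochastic[of None] by (simp add: sum_UNIV_option)
  have "\<theta> None = \<theta> None * p$None$None + (\<Sum>j\<in>UNIV. \<theta> (Some j) * p$Some j$None)"
    using traffic[of None] by (simp add: sum_UNIV_option)
  then have departures: "(\<Sum>j\<in>UNIV. \<theta> (Some j) * p$Some j$None) = \<theta> None * (\<Sum>i\<in>UNIV. p$None$Some i)"
    unfolding row by (simp add: right_diff_distrib)
  have "\<pi> (n(j := n j + 1)) * (s j (n j + 1) * p$Some j$None) = \<pi> n * (\<theta> (Some j) * p$Some j$None)" for j
    by (rule scaled_balance[OF local_balance])
  then have "(\<Sum>j\<in>UNIV. \<pi> (n(j := n j + 1)) * (s j (n j + 1) * p$Some j$None))
      = \<pi> n * (\<Sum>j\<in>UNIV. \<theta> (Some j) * p$Some j$None)"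
    by (simp only: sum_distrib_left)
  then show ?thesis
    by (simp add: departures arrivals sum_distrib_left mult.assoc)
qed

lemma jackson_node_balance:
  "(if n i > 0 then \<pi> (n(i := n i - 1)) * a i else 0)
   + (\<Sum>j\<in>UNIV. if i \<noteq> j \<and> n i > 0
        then \<pi> ((n(i := n i - 1))(j := n j + 1)) * (s j (n j + 1) * p$Some j$Some i) else 0)
   = \<pi> n * ((\<Sum>j\<in>UNIV. if j \<noteq> i \<and> n i > 0 then s i (n i) * p$Some i$Some j else 0)
            + (if n i > 0 then s i (n i) * p$Some i$None else 0))"
proof (cases "n i > 0")
  case True
  define n' where "n' = n(i := n i - 1)"
  have n: "n = n'(i := n' i + 1)"
    using True by (auto simp: n'_def fun_eq_iff)
  have "n' i + 1 = n i" "n'(i := n i) = n"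
    using True by (auto simp: n'_def)
  then have service: "\<pi> n * s i (n i) = \<theta> (Some i) * \<pi> n'"
    using local_balance[of n' i] by simp
  have move_in: "\<pi> ((n(i := n i - 1))(j := n j + 1)) * (s j (n j + 1) * p$Some j$Some i)
      = \<pi> n' * (\<theta> (Some j) * p$Some j$Some i)" if "j \<noteq> i" for j
  proof -
    have "n' j = n j" "(n(i := n i - 1))(j := n j + 1) = n'(j := n j + 1)"
      using that by (simp_all add: n'_def)
    then show ?thesis
      using scaled_balance[OF local_balance[of n' j], of "p$Some j$Some i"] by (simp only:)
  qed
  have "\<theta> (Some i) = \<theta> None * p$None$Some i + (\<Sum>j\<in>UNIV. \<theta> (Some j) * p$Some j$Some i)"
    using traffic[of "Some i"] by (simp add: sum_UNIV_option)
  then have inflow: "\<theta> None * p$None$Some i + (\<Sum>j\<in>UNIV. if j \<noteq> i then \<theta> (Some j) * p$Some j$Some i else 0)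
      = \<theta> (Some i) * (1 - p$Some i$Some i)"
    by (simp add: sum_if_neq algebra_simps)
  have outflow: "(\<Sum>j\<in>UNIV. if j \<noteq> i then p$Some i$Some j else 0) + p$Some i$None = 1 - p$Some i$Some i"
    using stochastic[of "Some i"] by (simp add: sum_UNIV_option sum_if_neq)
  have "(\<Sum>j\<in>UNIV. if i \<noteq> j then \<pi> ((n(i := n i - 1))(j := n j + 1)) * (s j (n j + 1) * p$Some j$Some i) else 0)
      = (\<Sum>j\<in>UNIV. if j \<noteq> i then \<pi> n' * (\<theta> (Some j) * p$Some j$Some i) else 0)"
    by (intro sum.cong refl if_cong move_in) auto
  also have "\<dots> = \<pi> n' * (\<Sum>j\<in>UNIV. if j \<noteq> i then \<theta> (Some j) * p$Some j$Some i else 0)"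
    unfolding sum_distrib_left by (rule sum.cong) auto
  finally have moves: "(\<Sum>j\<in>UNIV. if i \<noteq> j then \<pi> ((n(i := n i - 1))(j := n j + 1)) * (s j (n j + 1) * p$Some j$Some i) else 0)
      = \<pi> n' * (\<Sum>j\<in>UNIV. if j \<noteq> i then \<theta> (Some j) * p$Some j$Some i else 0)" .
  have "(if n i > 0 then \<pi> (n(i := n i - 1)) * a i else 0)
      + (\<Sum>j\<in>UNIV. if i \<noteq> j \<and> n i > 0
          then \<pi> ((n(i := n i - 1))(j := n j + 1)) * (s j (n j + 1) * p$Some j$Some i) else 0)
      = \<pi> n' * (\<theta> (Some i) * (1 - p$Some i$Some i))"
    using True by (simp add: moves arrivals n'_def flip: inflow) (simp add: algebra_simps)
  also have "\<dots> = \<pi> n * s i (n i) * ((\<Sum>j\<in>UNIV. if j \<noteq> i then p$Some i$Some j else 0) + p$Some i$None)"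
    by (simp add: service outflow)
  also have "\<dots> = \<pi> n * ((\<Sum>j\<in>UNIV. if j \<noteq> i \<and> n i > 0 then s i (n i) * p$Some i$Some j else 0)
      + (if n i > 0 then s i (n i) * p$Some i$None else 0))"
    unfolding sum_distrib_left distrib_left distrib_right using True
    by (intro arg_cong2[where f="(+)"] sum.cong) auto
  finally show ?thesis .
qed simp

lemma jackson_global_balance: "jackson_in_flow a s p \<pi> n = \<pi> n * jackson_out_rate a s p n"
proof -
  have "jackson_in_flow a s p \<pi> n
      = (\<Sum>i\<in>UNIV. (if n i > 0 then \<pi> (n(i := n i - 1)) * a i else 0)
          + (\<Sum>j\<in>UNIV. if i \<noteq> j \<and> n i > 0
               then \<pi> ((n(i := n i - 1))(j := n j + 1)) * (s j (n j + 1) * p$Some j$Some i) else 0))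
        + (\<Sum>j\<in>UNIV. \<pi> (n(j := n j + 1)) * (s j (n j + 1) * p$Some j$None))"
    unfolding jackson_in_flow_def sum.distrib by (subst sum.swap) (rule refl)
  also have "\<dots> = (\<Sum>i\<in>UNIV. \<pi> n * ((\<Sum>j\<in>UNIV. if j \<noteq> i \<and> n i > 0 then s i (n i) * p$Some i$Some j else 0)
            + (if n i > 0 then s i (n i) * p$Some i$None else 0))) + \<pi> n * (\<Sum>i\<in>UNIV. a i)"
    by (simp only: jackson_node_balance jackson_departure_balance)
  also have "\<dots> = \<pi> n * jackson_out_rate a s p n"
    unfolding jackson_out_rate_def by (simp only: sum_distrib_left[symmetric] sum.distrib distrib_left add_ac)
  finally show ?thesis .
qed

end

lemma ctmc_qout_jackson_rate: "ctmc_qout UNIV (jackson_rate a s p) n = jackson_out_rate a s p n"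
  unfolding ctmc_qout_def by (rule infsumI[OF jackson_rate_has_sum_out])

lemma jackson_stationaryI:
  fixes a :: "'j::finite \<Rightarrow> real" and s :: "'j \<Rightarrow> nat \<Rightarrow> real"
    and p :: "real^'j option^'j option" and \<pi> :: "('j \<Rightarrow> nat) \<Rightarrow> real" and \<theta> :: "'j option \<Rightarrow> real"
  assumes "\<And>n j. \<pi> (n(j := n j + 1)) * s j (n j + 1) = \<theta> (Some j) * \<pi> n"
    and "\<And>i. a i = \<theta> None * p$None$Some i"
    and "\<And>k. \<theta> k = (\<Sum>i\<in>UNIV. \<theta> i * p$i$k)"
    and "\<And>k. (\<Sum>l\<in>UNIV. p$k$l) = 1"
    and "\<And>n. 0 \<le> \<pi> n" and "(\<pi> has_sum 1) UNIV"
  shows "ctmc_stationary UNIV (jackson_rate a s p) \<pi>"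
  using assms(5,6) jackson_rate_has_sum_in[of \<pi> a s p]
  unfolding ctmc_stationary_def ctmc_qout_jackson_rate jackson_global_balance[OF assms(1-4)]
  by blast

lemma has_sum_jackson_service:
  fixes \<pi> :: "('j::finite \<Rightarrow> nat) \<Rightarrow> real"
  assumes local_balance: "\<And>n. \<pi> (n(j := n j + 1)) * s j (n j + 1) = t * \<pi> n"
    and "(\<pi> has_sum 1) UNIV"
  shows "((\<lambda>n. if n j > 0 then \<pi> n * s j (n j) else 0) has_sum t) UNIV"
proof -
  have "((\<lambda>m. t * \<pi> m) has_sum t) UNIV"
    using has_sum_cmult_right[OF assms(2), of t] by simp
  also have "?this \<longleftrightarrow> ((\<lambda>n. \<pi> n * s j (n j)) has_sum t) {n. n j > 0}"
  proof (rule has_sum_reindex_bij_witness[where j="\<lambda>m. m(j := m j + 1)" and i="\<lambda>n. n(j := n j - 1)"])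
    show "\<pi> (m(j := m j + 1)) * s j ((m(j := m j + 1)) j) = t * \<pi> m" for m
      using local_balance[of m] by simp
  qed (auto simp: fun_eq_iff)
  also have "\<dots> \<longleftrightarrow> ((\<lambda>n. if n j > 0 then \<pi> n * s j (n j) else 0) has_sum t) UNIV"
    by (rule has_sum_cong_neutral) auto
  finally show ?thesis .
qed

lemma jackson_out_rate_summable:
  fixes a :: "'j::finite \<Rightarrow> real" and s :: "'j \<Rightarrow> nat \<Rightarrow> real"
    and p :: "real^'j option^'j option" and \<pi> :: "('j \<Rightarrow> nat) \<Rightarrow> real" and t :: "'j \<Rightarrow> real"
  assumes "\<And>n j. \<pi> (n(j := n j + 1)) * s j (n j + 1) = t j * \<pi> n"
    and "(\<pi> has_sum 1) UNIV"
  shows "(\<lambda>n. \<pi> n * jackson_out_rate a s p n) summable_on UNIV"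
proof -
  define g where "g j n = (if n j > 0 then \<pi> n * s j (n j) else 0)" for j n
  have "\<pi> n * jackson_out_rate a s p n = \<pi> n * (\<Sum>i\<in>UNIV. a i)
      + (\<Sum>j\<in>UNIV. \<Sum>i\<in>UNIV. (if i \<noteq> j then p$Some j$Some i else 0) * g j n)
      + (\<Sum>j\<in>UNIV. p$Some j$None * g j n)" for n
  proof -
    have "\<pi> n * (if i \<noteq> j \<and> n j > 0 then s j (n j) * p$Some j$Some i else 0)
        = (if i \<noteq> j then p$Some j$Some i else 0) * g j n" for i j
      by (simp add: g_def)
    moreover have "\<pi> n * (if n j > 0 then s j (n j) * p$Some j$None else 0) = p$Some j$None * g j n" for j
      by (simp add: g_def)
    ultimately show ?thesis
      unfolding jackson_out_rate_def by (simp only: distrib_left sum_distrib_left)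
  qed
  moreover have "((\<lambda>n. \<pi> n * (\<Sum>i\<in>UNIV. a i)
      + (\<Sum>j\<in>UNIV. \<Sum>i\<in>UNIV. (if i \<noteq> j then p$Some j$Some i else 0) * g j n)
      + (\<Sum>j\<in>UNIV. p$Some j$None * g j n)) has_sum
      (1 * (\<Sum>i\<in>UNIV. a i) + (\<Sum>j\<in>UNIV. \<Sum>i\<in>UNIV. (if i \<noteq> j then p$Some j$Some i else 0) * t j)
      + (\<Sum>j\<in>UNIV. p$Some j$None * t j))) UNIV"
    unfolding g_def
    by (intro has_sum_add has_sum_sum_functions finite has_sum_cmult_right has_sum_cmult_left
        has_sum_jackson_service assms)
  ultimately show ?thesis
    by (simp add: has_sum_imp_summable)
qed

lemma jackson_rate_nonneg:
  assumes "\<And>i. 0 \<le> a i" "\<And>j k. k > 0 \<Longrightarrow> 0 \<le> s j k" "\<And>x y. 0 \<le> p$x$y"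
  shows "0 \<le> jackson_rate a s p n m"
  unfolding jackson_rate_def using assms
  by (auto intro!: add_nonneg_nonneg sum_nonneg mult_nonneg_nonneg)

definition jackson_targets :: "('j::finite \<Rightarrow> nat) \<Rightarrow> ('j \<Rightarrow> nat) set" where
  "jackson_targets n = range (\<lambda>i. n(i := n i + 1)) \<union> range (\<lambda>(j, i). (n(j := n j - 1))(i := n i + 1))
     \<union> range (\<lambda>j. n(j := n j - 1))"

lemma finite_jackson_targets: "finite (jackson_targets n)"
  unfolding jackson_targets_def by simp

lemma jackson_rate_eq_0_outside_targets:
  assumes "m \<notin> jackson_targets n"
  shows "jackson_rate a s p n m = 0"
proof -
  have "(if m = n(i := n i + 1) then a i else 0) = 0"
    and "(if i \<noteq> j \<and> n j > 0 \<and> m = (n(j := n j - 1))(i := n i + 1) then s j (n j) * p$Some j$Some i else 0) = 0"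
    and "(if n j > 0 \<and> m = n(j := n j - 1) then s j (n j) * p$Some j$None else 0) = 0" for i j
    using assms by (auto simp: jackson_targets_def)
  then show ?thesis
    unfolding jackson_rate_def by simp
qed

lemma jackson_rate_frozen:
  assumes "\<And>i. i \<in> B \<Longrightarrow> a i = 0" and "\<And>j k. j \<in> B \<Longrightarrow> s j k = 0"
    and "\<And>j i. i \<in> B \<Longrightarrow> p$Some j$Some i = 0"
    and "b \<in> B" "m b \<noteq> n b"
  shows "jackson_rate a s p n m = 0"
proof -
  have "(if m = n(i := n i + 1) then a i else 0) = 0"
    and "(if i \<noteq> j \<and> n j > 0 \<and> m = (n(j := n j - 1))(i := n i + 1) then s j (n j) * p$Some j$Some i else 0) = 0"
    and "(if n j > 0 \<and> m = n(j := n j - 1) then s j (n j) * p$Some j$None else 0) = 0" for i j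
    using assms by (cases "i = b"; cases "j = b"; auto)+
  then show ?thesis
    unfolding jackson_rate_def by simp
qed

lemma jackson_rate_mono:
  fixes a a' :: "'j::finite \<Rightarrow> real" and s s' :: "'j \<Rightarrow> nat \<Rightarrow> real"
    and p p' :: "real^'j option^'j option"
  assumes "0 \<le> \<kappa>"
    and "\<And>i. \<kappa> * a i \<le> a' i"
    and "\<And>j k i. k > 0 \<Longrightarrow> \<kappa> * (s j k * p$Some j$Some i) \<le> s' j k * p'$Some j$Some i"
    and "\<And>j k. k > 0 \<Longrightarrow> \<kappa> * (s j k * p$Some j$None) \<le> s' j k * p'$Some j$None"
  shows "\<kappa> * jackson_rate a s p n m \<le> jackson_rate a' s' p' n m"
proof (cases "m = n")
  case False
  have "\<kappa> * (if m = n(i := n i + 1) then a i else 0) \<le> (if m = n(i := n i + 1) then a' i else 0)"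
    and "\<kappa> * (if i \<noteq> j \<and> n j > 0 \<and> m = (n(j := n j - 1))(i := n i + 1) then s j (n j) * p$Some j$Some i else 0)
      \<le> (if i \<noteq> j \<and> n j > 0 \<and> m = (n(j := n j - 1))(i := n i + 1) then s' j (n j) * p'$Some j$Some i else 0)"
    and "\<kappa> * (if n j > 0 \<and> m = n(j := n j - 1) then s j (n j) * p$Some j$None else 0)
      \<le> (if n j > 0 \<and> m = n(j := n j - 1) then s' j (n j) * p'$Some j$None else 0)" for i j
    using assms by auto
  then show ?thesis
    unfolding jackson_rate_def if_not_P[OF False]
    by (simp only: distrib_left sum_distrib_left) (intro add_mono sum_mono)
qed (simp add: jackson_rate_def)

section \<open>Randomized skipping\<close>

lemma matrix_mult_diag_mat_component: "(A ** diag_mat d)$i$k = A$i$k * (d k :: real)"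
  by (simp add: matrix_matrix_mult_def diag_mat_def if_distrib if_distribR cong: if_cong)

lemma mat_1_diff_mult_component: "((mat 1 - A) ** B)$i$k = B$i$k - (\<Sum>l\<in>UNIV. A$i$l * (B$l$k :: real))"
  by (simp add: matrix_matrix_mult_def mat_def left_diff_distrib sum_subtractf
      if_distrib[of "\<lambda>x. x * _"] cong: if_cong)

lemma mult_mat_1_diff_component: "(B ** (mat 1 - A))$i$k = B$i$k - (\<Sum>l\<in>UNIV. B$i$l * (A$l$k :: real))"
  by (simp add: matrix_matrix_mult_def mat_def right_diff_distrib sum_subtractf
      if_distrib[of "\<lambda>x. _ * x"] cong: if_cong)

lemma mat_1_diff_mult_vector_component: "((mat 1 - A) *v x)$i = x$i - (\<Sum>l\<in>UNIV. A$i$l * (x$l :: real))"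
  by (simp add: matrix_vector_mult_def mat_def left_diff_distrib sum_subtractf
      if_distrib[of "\<lambda>x. x * _"] cong: if_cong)

text \<open>The entry \<open>(i, k)\<close> of \<open>(I - r I\<^sub>1\<^sub>-\<^sub>\<alpha>)\<^sup>-\<^sup>1\<close> counts the expected visits to \<open>k\<close> of the
  path of rejected proposals started in \<open>i\<close>; \<open>skip_matrix r \<alpha>\<close> is this matrix times \<open>r I\<^sub>\<alpha>\<close>.\<close>

definition skip_potential :: "real^'n::finite^'n \<Rightarrow> ('n \<Rightarrow> real) \<Rightarrow> real^'n^'n" where
  "skip_potential r \<alpha> = matrix_inv (mat 1 - r ** diag_mat (\<lambda>i. 1 - \<alpha> i))"

locale randomized_skipping =
  fixes r :: "real^'n::finite^'n" and \<alpha> :: "'n \<Rightarrow> real" and z :: 'n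
  assumes r_nonneg: "\<And>i k. 0 \<le> r$i$k"
    and r_stochastic: "\<And>i. (\<Sum>k\<in>UNIV. r$i$k) = 1"
    and r_irreducible: "\<And>i k. (i, k) \<in> {(a, b). r$a$b > 0}\<^sup>*"
    and alpha_nonneg: "\<And>i. 0 \<le> \<alpha> i"
    and alpha_le_1: "\<And>i. \<alpha> i \<le> 1"
    and alpha_z: "\<alpha> z = 1"
begin

abbreviation N :: "real^'n^'n" where "N \<equiv> skip_potential r \<alpha>"

lemma skip_min_propagates:
  assumes superharmonic: "\<And>i. (\<Sum>k\<in>UNIV. r$i$k * (1 - \<alpha> k) * y k) \<le> y i"
    and m_le: "\<And>k. m \<le> y k" and m_neg: "m < 0"
    and "y x = m" and "r$x$k > 0"
  shows "y k = m \<and> \<alpha> k = 0"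
proof -
  have term_nonneg: "0 \<le> r$x$l * (1 - \<alpha> l) * y l - r$x$l * m" for l
  proof -
    have "m \<le> (1 - \<alpha> l) * y l"
    proof (cases "0 \<le> y l")
      case True
      then show ?thesis
        using m_neg alpha_le_1[of l] by (simp add: order.trans[OF less_imp_le[OF m_neg]])
    next
      case False
      then have "y l \<le> (1 - \<alpha> l) * y l"
        using alpha_nonneg[of l] by (simp add: algebra_simps mult_nonneg_nonpos)
      then show ?thesis
        using m_le[of l] by linarith
    qed
    then have "r$x$l * m \<le> r$x$l * ((1 - \<alpha> l) * y l)"
      using r_nonneg[of x l] by (rule mult_left_mono)
    then show ?thesis
      by (simp add: mult.assoc)
  qed
  have "(\<Sum>l\<in>UNIV. r$x$l * (1 - \<alpha> l) * y l - r$x$l * m) = (\<Sum>l\<in>UNIV. r$x$l * (1 - \<alpha> l) * y l) - m"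
    using r_stochastic[of x] by (simp add: sum_subtractf flip: sum_distrib_right)
  also have "\<dots> \<le> 0"
    using superharmonic[of x] \<open>y x = m\<close> by linarith
  finally have "(\<Sum>l\<in>UNIV. r$x$l * (1 - \<alpha> l) * y l - r$x$l * m) = 0"
    using sum_nonneg[of UNIV "\<lambda>l. r$x$l * (1 - \<alpha> l) * y l - r$x$l * m", OF term_nonneg] by linarith
  then have "r$x$k * (1 - \<alpha> k) * y k - r$x$k * m = 0"
    using term_nonneg by (simp add: sum_nonneg_eq_0_iff)
  then have "r$x$k * ((1 - \<alpha> k) * y k - m) = 0"
    by (simp add: algebra_simps)
  then have attained: "(1 - \<alpha> k) * y k = m"
    using \<open>r$x$k > 0\<close> by simp
  have "y k < 0"
  proof (rule ccontr)
    assume "\<not> y k < 0"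
    then have "0 \<le> (1 - \<alpha> k) * y k"
      using alpha_le_1[of k] by simp
    then show False
      using attained m_neg by linarith
  qed
  then have "y k \<le> (1 - \<alpha> k) * y k"
    using alpha_nonneg[of k] by (simp add: algebra_simps mult_nonneg_nonpos)
  then have "y k = m"
    using attained m_le[of k] by linarith
  with attained m_neg show ?thesis
    by (simp add: algebra_simps)
qed

text \<open>A negative minimum of a superharmonic function of \<open>r I\<^sub>1\<^sub>-\<^sub>\<alpha>\<close> would spread along the
  edges of \<open>r\<close>, through states with \<open>\<alpha> = 0\<close>, to the always accepting state \<open>z\<close>.\<close>

lemma skip_minimum_principle:
  assumes superharmonic: "\<And>i. (\<Sum>k\<in>UNIV. r$i$k * (1 - \<alpha> k) * y k) \<le> y i"
  shows "0 \<le> y i"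
proof (rule ccontr)
  assume "\<not> 0 \<le> y i"
  define m where "m = Min (range y)"
  have m_le: "m \<le> y k" for k
    unfolding m_def by (rule Min_le) auto
  have m_neg: "m < 0"
    using m_le[of i] \<open>\<not> 0 \<le> y i\<close> by linarith
  note successor = skip_min_propagates[OF superharmonic m_le m_neg]
  have "m \<in> range y"
    unfolding m_def by (rule Min_in) auto
  then obtain x where x: "y x = m"
    by auto
  obtain k where k: "r$x$k > 0"
  proof -
    have "(\<Sum>k\<in>UNIV. r$x$k) \<noteq> 0"
      using r_stochastic[of x] by simp
    then obtain k where "r$x$k \<noteq> 0"
      by (meson sum.neutral)
    then show ?thesis
      using that r_nonneg[of x k] by (simp add: less_le)
  qed
  have "(k, z) \<in> {(a, b). r$a$b > 0}\<^sup>*"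
    by (rule r_irreducible)
  then have "y z = m \<and> \<alpha> z = 0"
  proof (induction rule: rtrancl_induct)
    case base
    show ?case using successor[OF x k] .
  next
    case (step v w)
    then show ?case using successor[of v w] by simp
  qed
  then show False
    using alpha_z by simp
qed

lemma skip_potential_inverse:
  "(mat 1 - r ** diag_mat (\<lambda>i. 1 - \<alpha> i)) ** N = mat 1"
  "N ** (mat 1 - r ** diag_mat (\<lambda>i. 1 - \<alpha> i)) = mat 1"
proof -
  let ?A = "mat 1 - r ** diag_mat (\<lambda>i. 1 - \<alpha> i)"
  have "x = 0" if "?A *v x = 0" for x
  proof -
    have harmonic: "(\<Sum>l\<in>UNIV. r$i$l * (1 - \<alpha> l) * x$l) = x$i" for i
      using arg_cong[OF that, of "\<lambda>v. v$i"]
      by (simp add: mat_1_diff_mult_vector_component matrix_mult_diag_mat_component)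
    have "0 \<le> x$i" "0 \<le> - x$i" for i
      by (rule skip_minimum_principle; simp add: harmonic sum_negf)+
    then show "x = 0"
      by (simp add: vec_eq_iff) (meson antisym neg_0_le_iff_le)
  qed
  then obtain B where "B ** ?A = mat 1"
    using matrix_left_invertible_ker by blast
  then have "\<exists>B. ?A ** B = mat 1 \<and> B ** ?A = mat 1"
    using matrix_left_right_inverse by blast
  then have "?A ** N = mat 1 \<and> N ** ?A = mat 1"
    unfolding skip_potential_def matrix_inv_def by (rule someI_ex)
  then show "?A ** N = mat 1" "N ** ?A = mat 1"
    by auto
qed

lemma skip_potential_left: "N$i$k = (if i = k then 1 else 0) + (\<Sum>l\<in>UNIV. r$i$l * (1 - \<alpha> l) * N$l$k)"
proof -
  have "((mat 1 - r ** diag_mat (\<lambda>i. 1 - \<alpha> i)) ** N)$i$k = (if i = k then 1 else 0)"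
    unfolding skip_potential_inverse(1) by (simp add: mat_def)
  then show ?thesis
    unfolding mat_1_diff_mult_component matrix_mult_diag_mat_component by linarith
qed

lemma skip_potential_right: "N$i$k = (if i = k then 1 else 0) + (\<Sum>l\<in>UNIV. N$i$l * (r$l$k * (1 - \<alpha> k)))"
proof -
  have "(N ** (mat 1 - r ** diag_mat (\<lambda>i. 1 - \<alpha> i)))$i$k = (if i = k then 1 else 0)"
    unfolding skip_potential_inverse(2) by (simp add: mat_def)
  then show ?thesis
    unfolding mult_mat_1_diff_component matrix_mult_diag_mat_component by linarith
qed

lemma skip_potential_nonneg: "0 \<le> N$i$k"
proof (rule skip_minimum_principle[of "\<lambda>l. N$l$k"])
  fix i
  have "0 \<le> (if i = k then 1 else 0 :: real)"
    by simp
  then show "(\<Sum>l\<in>UNIV. r$i$l * (1 - \<alpha> l) * N$l$k) \<le> N$i$k"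
    using skip_potential_left[of i k] by linarith
qed

lemma skip_potential_step: "N$i$l * (r$l$k * (1 - \<alpha> k)) \<le> N$i$k"
proof -
  have "N$i$l * (r$l$k * (1 - \<alpha> k)) \<le> (\<Sum>l'\<in>UNIV. N$i$l' * (r$l'$k * (1 - \<alpha> k)))"
    by (rule member_le_sum) (auto intro!: mult_nonneg_nonneg skip_potential_nonneg r_nonneg simp: alpha_le_1)
  also have "\<dots> \<le> N$i$k"
    using skip_potential_right[of i k] by simp
  finally show ?thesis .
qed

lemma skip_potential_diag: "1 \<le> N$i$i"
proof -
  have "0 \<le> (\<Sum>l\<in>UNIV. N$i$l * (r$l$i * (1 - \<alpha> i)))"
    by (auto intro!: sum_nonneg mult_nonneg_nonneg skip_potential_nonneg r_nonneg simp: alpha_le_1)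
  then show ?thesis
    using skip_potential_right[of i i] by simp
qed

lemma traffic_skip_potential:
  assumes traffic: "\<And>k. \<eta> k = (\<Sum>i\<in>UNIV. \<eta> i * r$i$k)"
  shows "(\<Sum>i\<in>UNIV. \<eta> i * \<alpha> i * N$i$k) = \<eta> k"
proof -
  have accepted: "\<eta> i * \<alpha> i = \<eta> i - (\<Sum>j\<in>UNIV. \<eta> j * r$j$i * (1 - \<alpha> i))" for i
  proof -
    have "(\<Sum>j\<in>UNIV. \<eta> j * r$j$i * (1 - \<alpha> i)) = \<eta> i * (1 - \<alpha> i)"
      by (simp only: traffic[of i] sum_distrib_right)
    then show ?thesis
      by (simp add: algebra_simps)
  qed
  have "(\<Sum>i\<in>UNIV. \<eta> i * \<alpha> i * N$i$k)
      = (\<Sum>i\<in>UNIV. \<eta> i * N$i$k) - (\<Sum>i\<in>UNIV. \<Sum>j\<in>UNIV. \<eta> j * (r$j$i * (1 - \<alpha> i) * N$i$k))"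
    by (simp add: accepted left_diff_distrib sum_subtractf sum_distrib_right mult.assoc)
  also have "\<dots> = (\<Sum>j\<in>UNIV. \<eta> j * (N$j$k - (\<Sum>i\<in>UNIV. r$j$i * (1 - \<alpha> i) * N$i$k)))"
    by (subst sum.swap) (simp add: right_diff_distrib sum_subtractf sum_distrib_left)
  also have "\<dots> = \<eta> k"
    by (subst skip_potential_left) (simp add: if_distrib[of "\<lambda>x. _ * x"] cong: if_cong)
  finally show ?thesis .
qed

abbreviation skipped :: "real^'n^'n" where "skipped \<equiv> skip_matrix r \<alpha>"

lemma skip_matrix_component: "skipped$i$k = (\<Sum>l\<in>UNIV. N$i$l * r$l$k) * \<alpha> k"
  unfolding skip_matrix_def skip_potential_def[symmetric]
  by (simp only: matrix_mult_diag_mat_component) (simp add: matrix_matrix_mult_def)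

lemma skip_matrix_nonneg: "0 \<le> skipped$i$k"
  unfolding skip_matrix_component
  by (intro mult_nonneg_nonneg sum_nonneg skip_potential_nonneg r_nonneg alpha_nonneg)

lemma skip_matrix_ge: "r$i$k * \<alpha> k \<le> skipped$i$k"
proof -
  have "r$i$k \<le> N$i$i * r$i$k"
    using mult_right_mono[OF skip_potential_diag r_nonneg] by simp
  also have "\<dots> \<le> (\<Sum>l\<in>UNIV. N$i$l * r$l$k)"
    by (rule member_le_sum[of i UNIV "\<lambda>l. N$i$l * r$l$k"])
      (auto intro!: mult_nonneg_nonneg skip_potential_nonneg r_nonneg)
  finally show ?thesis
    unfolding skip_matrix_component using alpha_nonneg by (rule mult_right_mono)
qed

lemma skip_matrix_eq_0: "\<alpha> k = 0 \<Longrightarrow> skipped$i$k = 0"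
  unfolding skip_matrix_component by simp

lemma skip_matrix_stochastic: "(\<Sum>k\<in>UNIV. skipped$i$k) = 1"
proof -
  have accepted: "(\<Sum>k\<in>UNIV. r$l$k * \<alpha> k) = 1 - (\<Sum>k\<in>UNIV. r$l$k * (1 - \<alpha> k))" for l
    using r_stochastic[of l] by (simp add: right_diff_distrib sum_subtractf)
  have "(\<Sum>k\<in>UNIV. skipped$i$k) = (\<Sum>l\<in>UNIV. N$i$l * (\<Sum>k\<in>UNIV. r$l$k * \<alpha> k))"
    unfolding skip_matrix_component
    by (simp add: sum_distrib_left sum_distrib_right mult.assoc) (rule sum.swap)
  also have "\<dots> = (\<Sum>l\<in>UNIV. N$i$l) - (\<Sum>l\<in>UNIV. \<Sum>k\<in>UNIV. N$i$l * (r$l$k * (1 - \<alpha> k)))"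
    unfolding accepted by (simp only: right_diff_distrib sum_subtractf sum_distrib_left mult_1_right)
  also have "\<dots> = (\<Sum>k\<in>UNIV. N$i$k - (\<Sum>l\<in>UNIV. N$i$l * (r$l$k * (1 - \<alpha> k))))"
    by (subst sum.swap) (rule sum_subtractf[symmetric])
  also have "\<dots> = 1"
    by (subst skip_potential_right) simp
  finally show ?thesis .
qed

lemma skip_matrix_traffic:
  assumes "\<And>k. \<eta> k = (\<Sum>i\<in>UNIV. \<eta> i * r$i$k)"
  shows "(\<Sum>i\<in>UNIV. \<eta> i * \<alpha> i * skipped$i$k) = \<eta> k * \<alpha> k"
proof -
  have "(\<Sum>i\<in>UNIV. \<eta> i * \<alpha> i * skipped$i$k) = (\<Sum>i\<in>UNIV. \<Sum>l\<in>UNIV. \<eta> i * \<alpha> i * N$i$l * r$l$k * \<alpha> k)"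
    unfolding skip_matrix_component by (simp add: sum_distrib_left sum_distrib_right mult.assoc)
  also have "\<dots> = (\<Sum>l\<in>UNIV. \<Sum>i\<in>UNIV. \<eta> i * \<alpha> i * N$i$l * r$l$k * \<alpha> k)"
    by (rule sum.swap)
  also have "\<dots> = (\<Sum>l\<in>UNIV. (\<Sum>i\<in>UNIV. \<eta> i * \<alpha> i * N$i$l) * r$l$k) * \<alpha> k"
    by (simp add: sum_distrib_right)
  also have "\<dots> = \<eta> k * \<alpha> k"
    using assms[of k] by (simp add: traffic_skip_potential[OF assms])
  finally show ?thesis .
qed

end

text \<open>Skipping every state except \<open>z\<close> gives \<open>\<eta> k = \<eta> z * N z k\<close>, and \<open>N z k > 0\<close>
  propagates along the edges of \<open>r\<close>.\<close>

lemma traffic_solution_pos: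
  fixes r :: "real^'n::finite^'n" and \<eta> :: "'n \<Rightarrow> real"
  assumes r_nonneg: "\<And>i k. 0 \<le> r$i$k" and r_stochastic: "\<And>i. (\<Sum>k\<in>UNIV. r$i$k) = 1"
    and r_irreducible: "\<And>i k. (i, k) \<in> {(a, b). r$a$b > 0}\<^sup>*"
    and traffic: "\<And>k. \<eta> k = (\<Sum>i\<in>UNIV. \<eta> i * r$i$k)"
    and "\<eta> z > 0"
  shows "\<eta> k > 0"
proof -
  define \<delta> where "\<delta> i = (if i = z then 1 else 0 :: real)" for i
  interpret randomized_skipping r \<delta> z
    by unfold_locales (auto simp: \<delta>_def r_nonneg r_stochastic r_irreducible)
  have "(\<Sum>i\<in>UNIV. \<eta> i * \<delta> i * N$i$k) = (\<Sum>i\<in>UNIV. if i = z then \<eta> z * N$z$k else 0)"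
    by (rule sum.cong) (auto simp: \<delta>_def)
  then have "\<eta> k = \<eta> z * N$z$k"
    using traffic_skip_potential[OF traffic, of k] by simp
  moreover have "(z, k) \<in> {(a, b). r$a$b > 0}\<^sup>*"
    by (rule r_irreducible)
  then have "N$z$k > 0"
  proof (induction rule: rtrancl_induct)
    case base
    show ?case using skip_potential_diag[of z] by simp
  next
    case (step y k)
    show ?case
    proof (cases "k = z")
      case True
      then show ?thesis using skip_potential_diag[of z] by simp
    next
      case False
      then have "0 < N$z$y * (r$y$k * (1 - \<delta> k))"
        using step by (simp add: \<delta>_def[of k])
      then show ?thesis
        using skip_potential_step[of z y k] by linarith
    qed
  qed
  ultimately show ?thesis
    using \<open>\<eta> z > 0\<close> by simp
qed

section \<open>Product-form distributions\<close>

lemma has_sum_product_nonneg: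
  fixes f :: "'a \<Rightarrow> real" and g :: "'b \<Rightarrow> real"
  assumes f: "(f has_sum a) A" and g: "(g has_sum b) B"
    and fn: "\<And>x. x \<in> A \<Longrightarrow> 0 \<le> f x" and gn: "\<And>y. y \<in> B \<Longrightarrow> 0 \<le> g y"
  shows "((\<lambda>(x,y). f x * g y) has_sum (a * b)) (A \<times> B)"
proof (rule has_sum_SigmaI[where g = "\<lambda>x. f x * b"])
  show "((\<lambda>y. case (x,y) of (x,y) \<Rightarrow> f x * g y) has_sum f x * b) B" if "x \<in> A" for x
    using has_sum_cmult_right[OF g, of "f x"] by simp
  show "((\<lambda>x. f x * b) has_sum a * b) A" using has_sum_cmult_left[OF f, of b] by simp
  show "(\<lambda>(x,y). f x * g y) summable_on A \<times> B"
  proof (rule nonneg_bdd_above_summable_on)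
    show "0 \<le> (case z of (x,y) \<Rightarrow> f x * g y)" if "z \<in> A \<times> B" for z using that fn gn by auto
    show "bdd_above (sum (\<lambda>(x,y). f x * g y) ` {F. F \<subseteq> A \<times> B \<and> finite F})"
    proof (rule bdd_aboveI2)
      fix F assume F: "F \<in> {F. F \<subseteq> A \<times> B \<and> finite F}"
      have sub: "F \<subseteq> fst ` F \<times> snd ` F" by force
      have "sum (\<lambda>(x,y). f x * g y) F \<le> sum (\<lambda>(x,y). f x * g y) (fst ` F \<times> snd ` F)"
        by (rule sum_mono2) (use F sub fn gn in \<open>auto intro!: mult_nonneg_nonneg\<close>)
      also have "\<dots> = (\<Sum>x\<in>fst ` F. f x) * (\<Sum>y\<in>snd ` F. g y)"
        by (simp add: sum_product sum.cartesian_product)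
      also have "\<dots> \<le> a * b"
      proof (rule mult_mono)
        show "(\<Sum>x\<in>fst ` F. f x) \<le> a"
          by (rule finite_sum_le_has_sum[OF f]) (use F fn in auto)
        show "(\<Sum>y\<in>snd ` F. g y) \<le> b"
          by (rule finite_sum_le_has_sum[OF g]) (use F gn in auto)
        show "0 \<le> a" by (rule has_sum_nonneg[OF f]) (use fn in auto)
        show "0 \<le> (\<Sum>y\<in>snd ` F. g y)" by (rule sum_nonneg) (use F gn in auto)
      qed
      finally show "sum (\<lambda>(x,y). f x * g y) F \<le> a * b" .
    qed
  qed
qed

lemma has_sum_prod_factors:
  fixes f :: "'j \<Rightarrow> nat \<Rightarrow> real" and G :: "('j \<Rightarrow> nat) \<Rightarrow> real"
  assumes "finite W" and fn: "\<And>j k. 0 \<le> f j k" and fs: "\<And>j. (f j has_sum 1) UNIV"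
    and "\<And>c. 0 \<le> G c" and "(G has_sum g) {c. \<forall>j\<in>W. c j = 0}"
  shows "((\<lambda>n. (\<Prod>j\<in>W. f j (n j)) * G (\<lambda>j. if j \<in> W then 0 else n j)) has_sum g) UNIV"
  using assms(1,4,5)
proof (induction W arbitrary: G g rule: finite_induct)
  case empty
  then show ?case by simp
next
  case (insert w W)
  define G' where "G' c = f w (c w) * G (c(w := 0))" for c
  have G'n: "0 \<le> G' c" for c
    using insert.prems fn by (simp add: G'_def)
  have prod: "((\<lambda>(k,d). f w k * G d) has_sum 1 * g) (UNIV \<times> {c. \<forall>j\<in>insert w W. c j = 0})"
    by (rule has_sum_product_nonneg[OF fs insert.prems(2)]) (use fn insert.prems(1) in auto)
  have "((\<lambda>(k,d). f w k * G d) has_sum g) (UNIV \<times> {c. \<forall>j\<in>insert w W. c j = 0})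
      = (G' has_sum g) {c. \<forall>j\<in>W. c j = 0}"
  proof (rule has_sum_reindex_bij_witness[where j="\<lambda>(k,d). d(w := k)" and i="\<lambda>c. (c w, c(w := 0))"])
    show "(case (a w, a(w := 0)) of (k, d) \<Rightarrow> d(w := k)) = a" for a by auto
    show "(b w, b(w := 0)) \<in> UNIV \<times> {c. \<forall>j\<in>insert w W. c j = 0}" if "b \<in> {c. \<forall>j\<in>W. c j = 0}" for b
      using that by auto
    show "(case a of (k, d) \<Rightarrow> d(w := k)) \<in> {c. \<forall>j\<in>W. c j = 0}" if "a \<in> UNIV \<times> {c. \<forall>j\<in>insert w W. c j = 0}" for a
      using that insert.hyps by auto
    show "((case a of (k, d) \<Rightarrow> d(w := k)) w, (case a of (k, d) \<Rightarrow> d(w := k))(w := 0)) = a"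
      if "a \<in> UNIV \<times> {c. \<forall>j\<in>insert w W. c j = 0}" for a
      using that by (auto simp: fun_eq_iff)
    show "G' (case a of (k, d) \<Rightarrow> d(w := k)) = (case a of (k, d) \<Rightarrow> f w k * G d)"
      if "a \<in> UNIV \<times> {c. \<forall>j\<in>insert w W. c j = 0}" for a
    proof -
      obtain k d where a: "a = (k, d)" by force
      then have "d w = 0" using that by auto
      then have "(d(w := k))(w := 0) = d" by (auto simp: fun_eq_iff)
      then show ?thesis using a by (simp add: G'_def)
    qed
  qed simp
  with prod have G's: "(G' has_sum g) {c. \<forall>j\<in>W. c j = 0}" by simp
  have IH: "((\<lambda>n. (\<Prod>j\<in>W. f j (n j)) * G' (\<lambda>j. if j \<in> W then 0 else n j)) has_sum g) UNIV"
    by (rule insert.IH[OF G'n G's])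
  have eq: "(\<Prod>j\<in>W. f j (n j)) * G' (\<lambda>j. if j \<in> W then 0 else n j)
     = (\<Prod>j\<in>insert w W. f j (n j)) * G (\<lambda>j. if j \<in> insert w W then 0 else n j)" for n
  proof -
    have e: "(\<lambda>j. if j \<in> W then 0 else n j)(w := 0) = (\<lambda>j. if j \<in> insert w W then 0 else n j)"
      by (auto simp: fun_eq_iff)
    show ?thesis using insert.hyps by (simp add: G'_def e)
  qed
  show ?case using IH by (simp add: eq)
qed

lemma jackson_factor_Suc:
  assumes "\<mu> j (Suc k) > 0"
  shows "jackson_factor \<eta> \<mu> j (Suc k) * \<mu> j (Suc k) = \<eta> (Some j) * jackson_factor \<eta> \<mu> j k"
proof -
  have "{1..Suc k} = insert (Suc k) {1..k}" by (rule atLeastAtMostSuc_conv) simp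
  then have "(\<Prod>l\<in>{1..Suc k}. \<eta> (Some j) / \<mu> j l) = \<eta> (Some j) / \<mu> j (Suc k) * (\<Prod>l\<in>{1..k}. \<eta> (Some j) / \<mu> j l)"
    by simp
  then show ?thesis unfolding jackson_factor_def using assms by (simp add: field_simps)
qed

lemma jackson_factor_distribution:
  assumes en: "0 \<le> \<eta> (Some j)" and mp: "\<And>k. 0 < k \<Longrightarrow> 0 < \<mu> j k"
    and sm: "summable (\<lambda>n. \<Prod>k\<in>{1..n}. \<eta> (Some j) / \<mu> j k)"
  shows "(jackson_factor \<eta> \<mu> j has_sum 1) UNIV" and "\<And>k. 0 \<le> jackson_factor \<eta> \<mu> j k"
    and "jackson_C \<eta> \<mu> j > 0"
proof -
  define t where "t = (\<lambda>n. \<Prod>k\<in>{1..n}. \<eta> (Some j) / \<mu> j k)"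
  have tn: "0 \<le> t n" for n unfolding t_def using en mp by (auto intro!: prod_nonneg divide_nonneg_pos)
  have C: "jackson_C \<eta> \<mu> j = suminf t" by (simp add: jackson_C_def t_def)
  have "t 0 \<le> suminf t"
    using sum_le_suminf[of t "{0}"] sm tn by (simp add: t_def)
  then have Cpos: "jackson_C \<eta> \<mu> j > 0" using C by (simp add: t_def)
  show "jackson_C \<eta> \<mu> j > 0" by (rule Cpos)
  have "(t has_sum suminf t) UNIV"
    by (rule sums_nonneg_imp_has_sum) (use sm tn in \<open>auto simp: t_def summable_sums\<close>)
  then have "((\<lambda>k. t k / jackson_C \<eta> \<mu> j) has_sum suminf t / jackson_C \<eta> \<mu> j) UNIV"
    by (rule has_sum_divide_const)
  then have H: "((\<lambda>k. t k / jackson_C \<eta> \<mu> j) has_sum 1) UNIV" using Cpos C by simp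
  moreover have "jackson_factor \<eta> \<mu> j = (\<lambda>k. t k / jackson_C \<eta> \<mu> j)"
    by (rule ext) (simp add: jackson_factor_def t_def)
  ultimately show "(jackson_factor \<eta> \<mu> j has_sum 1) UNIV" by simp
  show "0 \<le> jackson_factor \<eta> \<mu> j k" for k
    unfolding jackson_factor_def using tn[of k] Cpos by (simp add: t_def)
qed

section \<open>Positive recurrence from a finite invariant measure\<close>

text \<open>
  For a finite invariant measure \<open>\<nu>\<close> of \<open>P\<close> with \<open>\<nu> i > 0\<close>, unfolding invariance along
  excursions from \<open>i\<close> shows that \<open>\<nu> i\<close> times the expected
  number of visits to \<open>y\<close> before returning to \<open>i\<close> is at most \<open>\<nu> y\<close>. Summing over \<open>y\<close>, the expected
  excursion length is at most \<open>(\<Sum>y. \<nu> y) / \<nu> i\<close>: the probability of not having returned after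
  \<open>M\<close> steps therefore decays like \<open>1/M\<close>, and the same bound with weights \<open>w\<close> controls the
  expected return time. Paths are confined to the finite set of states reachable in \<open>M + 1\<close>
  steps, so that all sums involved are finite.
\<close>

primrec reachable_within :: "('s \<Rightarrow> 's \<Rightarrow> real) \<Rightarrow> 's \<Rightarrow> nat \<Rightarrow> 's set" where
  "reachable_within P i 0 = {i}"
| "reachable_within P i (Suc n) = reachable_within P i n \<union> (\<Union>x\<in>reachable_within P i n. {y. P x y \<noteq> 0})"

definition taboo_paths :: "'s set \<Rightarrow> 's \<Rightarrow> nat \<Rightarrow> 's list set" where
  "taboo_paths K i N = {xs. set xs \<subseteq> K - {i} \<and> length xs = N}"

text \<open>\<open>taboo_prob P K i N y\<close> is the probability of going from \<open>i\<close> to \<open>y\<close> in \<open>N + 1\<close> steps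
  through states of \<open>K - {i}\<close>; \<open>taboo_cost\<close> weights each such path by the \<open>w\<close>-cost of its
  intermediate states.\<close>

definition taboo_prob :: "('s \<Rightarrow> 's \<Rightarrow> real) \<Rightarrow> 's set \<Rightarrow> 's \<Rightarrow> nat \<Rightarrow> 's \<Rightarrow> real" where
  "taboo_prob P K i N y = (\<Sum>xs\<in>taboo_paths K i N. path_prob P (i # xs @ [y]))"

definition taboo_cost ::
  "('s \<Rightarrow> 's \<Rightarrow> real) \<Rightarrow> ('s \<Rightarrow> real) \<Rightarrow> 's set \<Rightarrow> 's \<Rightarrow> nat \<Rightarrow> 's \<Rightarrow> real" where
  "taboo_cost P w K i N y = (\<Sum>xs\<in>taboo_paths K i N. path_prob P (i # xs @ [y]) * sum_list (map w xs))"

lemma path_prob_snoc: "path_prob P (xs @ [x, y]) = path_prob P (xs @ [x]) * P x y"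
proof (induction xs)
  case (Cons a xs)
  then show ?case
    by (cases xs) (auto simp: mult.assoc)
qed simp

lemma path_prob_nonneg: "(\<And>x y. 0 \<le> P x y) \<Longrightarrow> 0 \<le> path_prob P xs"
  by (induction P xs rule: path_prob.induct) auto

lemma finite_taboo_paths: "finite K \<Longrightarrow> finite (taboo_paths K i N)"
  by (rule finite_subset[OF _ finite_lists_length_le[of K N]]) (auto simp: taboo_paths_def)

lemma taboo_paths_0: "taboo_paths K i 0 = {[]}"
  by (auto simp: taboo_paths_def)

lemma sum_taboo_paths_Suc:
  "(\<Sum>xs\<in>taboo_paths K i (Suc N). f xs) = (\<Sum>xs\<in>taboo_paths K i N. \<Sum>x\<in>K - {i}. f (xs @ [x]))"
proof -
  have paths: "taboo_paths K i (Suc N) = (\<lambda>(xs, x). xs @ [x]) ` (taboo_paths K i N \<times> (K - {i}))"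
  proof (intro equalityI subsetI)
    fix zs
    assume zs: "zs \<in> taboo_paths K i (Suc N)"
    then obtain xs x where "zs = xs @ [x]"
      by (cases zs rule: rev_cases) (auto simp: taboo_paths_def)
    with zs show "zs \<in> (\<lambda>(xs, x). xs @ [x]) ` (taboo_paths K i N \<times> (K - {i}))"
      by (auto simp: taboo_paths_def intro!: image_eqI[where x="(xs, x)"])
  qed (auto simp: taboo_paths_def)
  have inj: "inj_on (\<lambda>(xs, x). xs @ [x]) (taboo_paths K i N \<times> (K - {i}))"
    by (auto simp: inj_on_def)
  show ?thesis
    unfolding paths sum.reindex[OF inj] sum.cartesian_product by (auto intro: sum.cong)
qed

lemma taboo_prob_0: "taboo_prob P K i 0 y = P i y"
  by (simp add: taboo_prob_def taboo_paths_0)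

lemma taboo_prob_Suc: "taboo_prob P K i (Suc N) y = (\<Sum>x\<in>K - {i}. taboo_prob P K i N x * P x y)"
  unfolding taboo_prob_def sum_taboo_paths_Suc
  using path_prob_snoc[of P "i # _"] by (simp add: sum_distrib_right sum.swap[of _ "K - {i}"])

lemma taboo_cost_0: "taboo_cost P w K i 0 y = 0"
  by (simp add: taboo_cost_def taboo_paths_0)

lemma taboo_cost_Suc:
  "taboo_cost P w K i (Suc N) y
    = (\<Sum>x\<in>K - {i}. (taboo_cost P w K i N x + taboo_prob P K i N x * w x) * P x y)"
  unfolding taboo_cost_def taboo_prob_def sum_taboo_paths_Suc
  using path_prob_snoc[of P "i # _"]
  by (simp add: sum_distrib_left sum_distrib_right sum.distrib algebra_simps sum.swap[of _ "K - {i}"])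

lemma finite_reachable_within: "(\<And>x. finite {y. P x y \<noteq> 0}) \<Longrightarrow> finite (reachable_within P i n)"
  by (induction n) auto

lemma start_reachable_within: "i \<in> reachable_within P i n"
  by (induction n) auto

lemma reachable_within_mono: "m \<le> n \<Longrightarrow> reachable_within P i m \<subseteq> reachable_within P i n"
  by (rule lift_Suc_mono_le[of "reachable_within P i"]) auto

lemma reachable_within_step: "x \<in> reachable_within P i n \<Longrightarrow> P x y \<noteq> 0 \<Longrightarrow> y \<in> reachable_within P i (Suc n)"
  by auto

lemma path_reachable_within:
  "path_prob P (x # xs) \<noteq> 0 \<Longrightarrow> x \<in> reachable_within P i n \<Longrightarrow> set xs \<subseteq> reachable_within P i (n + length xs)"
proof (induction xs arbitrary: x n)
  case (Cons y ys)
  then have "path_prob P (y # ys) \<noteq> 0" and "y \<in> reachable_within P i (Suc n)"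
    by auto
  then have "set ys \<subseteq> reachable_within P i (Suc n + length ys)"
    by (rule Cons.IH)
  moreover have "y \<in> reachable_within P i (n + length (y # ys))"
    using \<open>y \<in> reachable_within P i (Suc n)\<close> reachable_within_mono[of "Suc n" "n + length (y # ys)" P i]
    by auto
  ultimately show ?case
    by simp
qed simp

lemma taboo_prob_support: "taboo_prob P K i N x \<noteq> 0 \<Longrightarrow> x \<in> reachable_within P i (Suc N)"
proof -
  assume "taboo_prob P K i N x \<noteq> 0"
  then obtain xs where "xs \<in> taboo_paths K i N" and "path_prob P (i # xs @ [x]) \<noteq> 0"
    unfolding taboo_prob_def by (meson sum.not_neutral_contains_not_neutral)
  then show ?thesis
    using path_reachable_within[of P i "xs @ [x]" i 0] by (simp add: taboo_paths_def)
qed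

declare reachable_within.simps(2)[simp del]

lemma ennreal_one_le_of_lower_bounds:
  fixes R :: ennreal
  assumes "\<And>M. ennreal (1 - c / real (Suc M)) \<le> R"
  shows "1 \<le> R"
proof -
  have "(\<lambda>M. 1 - c / real (Suc M)) \<longlonglongrightarrow> 1 - 0"
    by (intro tendsto_diff tendsto_const LIMSEQ_Suc[OF lim_const_over_n])
  then have "(\<lambda>M. ennreal (1 - c / real (Suc M))) \<longlonglongrightarrow> ennreal 1"
    by (intro tendsto_ennrealI) simp
  then show ?thesis
    using assms by (simp add: LIMSEQ_le_const2)
qed

locale invariant_measure_chain =
  fixes P :: "'s \<Rightarrow> 's \<Rightarrow> real" and \<nu> w :: "'s \<Rightarrow> real" and i :: 's
  assumes P_nonneg: "\<And>x y. 0 \<le> P x y"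
    and P_finite_support: "\<And>x. finite {y. P x y \<noteq> 0}"
    and P_stochastic: "\<And>x. (P x has_sum 1) UNIV"
    and \<nu>_nonneg: "\<And>x. 0 \<le> \<nu> x"
    and \<nu>_summable: "\<nu> summable_on UNIV"
    and \<nu>_invariant: "\<And>y. ((\<lambda>x. \<nu> x * P x y) has_sum \<nu> y) UNIV"
    and \<nu>_pos: "\<nu> i > 0"
    and w_nonneg: "\<And>x. 0 \<le> w x"
    and \<nu>_w_summable: "(\<lambda>x. \<nu> x * w x) summable_on UNIV"
begin

definition invariant_mass :: real where "invariant_mass = infsum \<nu> UNIV"

definition invariant_cost :: real where "invariant_cost = infsum (\<lambda>x. \<nu> x * w x) UNIV"

abbreviation excursions :: "'s list set" where "excursions \<equiv> {xs. set xs \<subseteq> UNIV - {i}}"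

definition short_excursions :: "nat \<Rightarrow> 's list set" where
  "short_excursions M = (\<Union>n\<le>M. taboo_paths (reachable_within P i (Suc M)) i n)"

lemma finite_reachable: "finite (reachable_within P i n)"
  by (rule finite_reachable_within[OF P_finite_support])

lemma taboo_prob_nonneg: "0 \<le> taboo_prob P K i N y"
  unfolding taboo_prob_def by (intro sum_nonneg path_prob_nonneg P_nonneg)

lemma taboo_cost_nonneg: "0 \<le> taboo_cost P w K i N y"
  unfolding taboo_cost_def
  by (intro sum_nonneg mult_nonneg_nonneg path_prob_nonneg P_nonneg sum_list_nonneg) (auto intro: w_nonneg)

lemma row_sum_le_1: "finite K \<Longrightarrow> (\<Sum>y\<in>K. P x y) \<le> 1"
  by (rule finite_sum_le_has_sum[OF P_stochastic]) (auto intro: P_nonneg)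

lemma row_sum_eq_1: "finite K \<Longrightarrow> {y. P x y \<noteq> 0} \<subseteq> K \<Longrightarrow> (\<Sum>y\<in>K. P x y) = 1"
  using P_stochastic[of x] has_sum_finite_neutralI[of K UNIV "P x"] has_sum_unique by blast

lemma taboo_visits_le_invariant: "finite K \<Longrightarrow> \<nu> i * (\<Sum>N<M. taboo_prob P K i N y) \<le> \<nu> y"
proof (induction M arbitrary: y)
  case (Suc M)
  have "\<nu> i * (\<Sum>N<Suc M. taboo_prob P K i N y)
      = \<nu> i * P i y + (\<Sum>x\<in>K - {i}. \<nu> i * (\<Sum>N<M. taboo_prob P K i N x) * P x y)"
    unfolding sum.lessThan_Suc_shift
    by (simp add: taboo_prob_0 taboo_prob_Suc distrib_left sum_distrib_left sum_distrib_right mult.assoc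
        sum.swap[of _ "{..<M}"])
  also have "\<dots> \<le> \<nu> i * P i y + (\<Sum>x\<in>K - {i}. \<nu> x * P x y)"
    using Suc.IH[OF Suc.prems] P_nonneg by (intro add_left_mono sum_mono mult_right_mono)
  also have "\<dots> = (\<Sum>x\<in>insert i (K - {i}). \<nu> x * P x y)"
    using Suc.prems by (subst sum.insert) auto
  also have "\<dots> \<le> \<nu> y"
    by (rule finite_sum_le_has_sum[OF \<nu>_invariant])
      (use Suc.prems in \<open>auto intro: \<nu>_nonneg P_nonneg mult_nonneg_nonneg\<close>)
  finally show ?case .
qed (simp add: \<nu>_nonneg)

lemma sum_taboo_visits_le:
  assumes "finite K"
  shows "(\<Sum>y\<in>K. w y * (\<Sum>N<M. taboo_prob P K i N y)) \<le> invariant_cost / \<nu> i"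
    and "(\<Sum>y\<in>K. \<Sum>N<M. taboo_prob P K i N y) \<le> invariant_mass / \<nu> i"
proof -
  have "w y * (\<Sum>N<M. taboo_prob P K i N y) \<le> \<nu> y * w y / \<nu> i" for y
    using mult_left_mono[OF taboo_visits_le_invariant[OF assms, where M=M and y=y] w_nonneg[of y]] \<nu>_pos
    by (simp add: field_simps)
  then have "(\<Sum>y\<in>K. w y * (\<Sum>N<M. taboo_prob P K i N y)) \<le> (\<Sum>y\<in>K. \<nu> y * w y) / \<nu> i"
    by (simp add: sum_divide_distrib sum_mono)
  also have "\<dots> \<le> invariant_cost / \<nu> i"
    unfolding invariant_cost_def using assms \<nu>_pos
    by (intro divide_right_mono finite_sum_le_infsum \<nu>_w_summable) (auto intro: \<nu>_nonneg w_nonneg mult_nonneg_nonneg)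
  finally show "(\<Sum>y\<in>K. w y * (\<Sum>N<M. taboo_prob P K i N y)) \<le> invariant_cost / \<nu> i" .
  have "(\<Sum>N<M. taboo_prob P K i N y) \<le> \<nu> y / \<nu> i" for y
    using taboo_visits_le_invariant[OF assms, where M=M and y=y] \<nu>_pos by (simp add: field_simps)
  then have "(\<Sum>y\<in>K. \<Sum>N<M. taboo_prob P K i N y) \<le> (\<Sum>y\<in>K. \<nu> y) / \<nu> i"
    by (simp add: sum_divide_distrib sum_mono)
  also have "\<dots> \<le> invariant_mass / \<nu> i"
    unfolding invariant_mass_def using assms \<nu>_pos
    by (intro divide_right_mono finite_sum_le_infsum \<nu>_summable) (auto intro: \<nu>_nonneg)
  finally show "(\<Sum>y\<in>K. \<Sum>N<M. taboo_prob P K i N y) \<le> invariant_mass / \<nu> i" .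
qed

lemma sum_short_excursions:
  "(\<Sum>xs\<in>short_excursions M. f xs) = (\<Sum>n\<le>M. \<Sum>xs\<in>taboo_paths (reachable_within P i (Suc M)) i n. f xs)"
proof -
  have "taboo_paths K i n \<inter> taboo_paths K i m = {}" if "n \<noteq> m" for K n m
    using that by (auto simp: taboo_paths_def)
  then show ?thesis
    unfolding short_excursions_def by (intro sum.UNION_disjoint) (auto simp: finite_taboo_paths finite_reachable)
qed

lemma finite_short_excursions: "finite (short_excursions M)"
  by (simp add: short_excursions_def finite_taboo_paths finite_reachable)

lemma infsum_excursions_le:
  fixes f :: "'s list \<Rightarrow> real"
  assumes f_nonneg: "\<And>xs. 0 \<le> f xs" and f_support: "\<And>xs. f xs \<noteq> 0 \<Longrightarrow> path_prob P (i # xs @ [i]) \<noteq> 0"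
    and bound: "\<And>M. (\<Sum>xs\<in>short_excursions M. f xs) \<le> B"
  shows "infsum (\<lambda>xs. ennreal (f xs)) excursions \<le> ennreal B"
  unfolding nonneg_infsum_complete[OF zero_le]
proof (rule SUP_least)
  fix F
  assume F: "F \<in> {F. finite F \<and> F \<subseteq> excursions}"
  define M where "M = Max (insert 0 (length ` F))"
  have length_le: "length xs \<le> M" if "xs \<in> F" for xs
    using F that unfolding M_def by (intro Max_ge) auto
  have "xs \<in> short_excursions M" if "xs \<in> F" "f xs \<noteq> 0" for xs
  proof -
    have "set (xs @ [i]) \<subseteq> reachable_within P i (length (xs @ [i]))"
      using path_reachable_within[OF f_support[OF that(2)], of i 0] by simp
    also have "\<dots> \<subseteq> reachable_within P i (Suc M)"
      using length_le[OF that(1)] by (intro reachable_within_mono) simp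
    finally show ?thesis
      using F that length_le[OF that(1)] unfolding short_excursions_def taboo_paths_def by auto
  qed
  then have "sum f F = sum f (F \<inter> short_excursions M)"
    using F by (intro sum.mono_neutral_right) auto
  also have "\<dots> \<le> sum f (short_excursions M)"
    using f_nonneg finite_short_excursions by (intro sum_mono2) auto
  also have "\<dots> \<le> B"
    by (rule bound)
  finally show "(\<Sum>xs\<in>F. ennreal (f xs)) \<le> ennreal B"
    using f_nonneg by (simp add: ennreal_leI)
qed

lemma sum_short_excursions_le_infsum:
  fixes f :: "'s list \<Rightarrow> real"
  assumes "\<And>xs. 0 \<le> f xs"
  shows "ennreal (\<Sum>xs\<in>short_excursions M. f xs) \<le> infsum (\<lambda>xs. ennreal (f xs)) excursions"
  unfolding nonneg_infsum_complete[OF zero_le]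
  using assms finite_short_excursions
  by (intro SUP_upper2[where i="short_excursions M"]) (auto simp: short_excursions_def taboo_paths_def)

lemma return_taboo_prob_le_1: "finite K \<Longrightarrow> (\<Sum>n\<le>M. taboo_prob P K i n i) \<le> 1"
  using taboo_visits_le_invariant[of K, where M="Suc M" and y=i] \<nu>_pos by (simp add: lessThan_Suc_atMost)

context
  fixes M :: nat
begin

abbreviation K :: "'s set" where "K \<equiv> reachable_within P i (Suc M)"

lemma sum_K_remove: "(\<Sum>y\<in>K. f y) = f i + (\<Sum>y\<in>K - {i}. f y)"
  by (rule sum.remove[OF finite_reachable start_reachable_within])

lemma taboo_mass_Suc:
  assumes "Suc N \<le> M"
  shows "(\<Sum>y\<in>K. taboo_prob P K i (Suc N) y) = (\<Sum>x\<in>K - {i}. taboo_prob P K i N x)"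
proof -
  have "(\<Sum>y\<in>K. taboo_prob P K i (Suc N) y) = (\<Sum>x\<in>K - {i}. taboo_prob P K i N x * (\<Sum>y\<in>K. P x y))"
    by (simp add: taboo_prob_Suc sum.swap[of _ K] sum_distrib_left)
  also have "\<dots> = (\<Sum>x\<in>K - {i}. taboo_prob P K i N x)"
  proof (rule sum.cong)
    fix x
    show "taboo_prob P K i N x * (\<Sum>y\<in>K. P x y) = taboo_prob P K i N x"
    proof (cases "taboo_prob P K i N x = 0")
      case False
      then have "x \<in> reachable_within P i (Suc N)"
        by (rule taboo_prob_support)
      then have "{y. P x y \<noteq> 0} \<subseteq> reachable_within P i (Suc (Suc N))"
        by (auto intro: reachable_within_step)
      also have "\<dots> \<subseteq> K"
        using assms by (intro reachable_within_mono) simp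
      finally show ?thesis
        by (simp add: row_sum_eq_1 finite_reachable)
    qed simp
  qed simp
  finally show ?thesis .
qed

lemma taboo_mass_identity:
  "N \<le> M \<Longrightarrow> (\<Sum>n\<le>N. taboo_prob P K i n i) + (\<Sum>y\<in>K - {i}. taboo_prob P K i N y) = 1"
proof (induction N)
  case 0
  have "{y. P i y \<noteq> 0} \<subseteq> reachable_within P i (Suc 0)"
    using reachable_within_step[OF start_reachable_within, where n=0] by auto
  also have "\<dots> \<subseteq> K"
    by (rule reachable_within_mono) simp
  finally have "{y. P i y \<noteq> 0} \<subseteq> K" .
  then show ?case
    using sum_K_remove[of "taboo_prob P K i 0"]
    by (simp add: taboo_prob_0 row_sum_eq_1 finite_reachable)
next
  case (Suc N)
  then show ?case
    using taboo_mass_Suc[OF Suc.prems] sum_K_remove[of "taboo_prob P K i (Suc N)"]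
    by simp
qed

lemma return_prob_lower_bound:
  "1 - (invariant_mass / \<nu> i) / real (Suc M) \<le> (\<Sum>n\<le>M. taboo_prob P K i n i)"
proof -
  define s where "s N = (\<Sum>y\<in>K - {i}. taboo_prob P K i N y)" for N
  have s_decreasing: "s M \<le> s N" if "N \<le> M" for N
    using that
  proof (induction N rule: inc_induct)
    case (step n)
    have "s (Suc n) \<le> s n"
      using taboo_mass_Suc[of n] step.hyps sum_K_remove[of "taboo_prob P K i (Suc n)"] taboo_prob_nonneg[of K "Suc n" i]
      by (simp add: s_def)
    with step.IH show ?case
      by simp
  qed simp
  have "real (Suc M) * s M \<le> (\<Sum>N\<le>M. s N)"
    using sum_mono[of "{..M}" "\<lambda>_. s M" s] s_decreasing by simp
  also have "\<dots> = (\<Sum>y\<in>K - {i}. \<Sum>N<Suc M. taboo_prob P K i N y)"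
    unfolding s_def by (simp add: sum.swap[of _ "{..M}"] lessThan_Suc_atMost)
  also have "\<dots> \<le> (\<Sum>y\<in>K. \<Sum>N<Suc M. taboo_prob P K i N y)"
    by (intro sum_mono2 finite_reachable sum_nonneg taboo_prob_nonneg) auto
  also have "\<dots> \<le> invariant_mass / \<nu> i"
    by (rule sum_taboo_visits_le(2)[OF finite_reachable])
  finally have "real (Suc M) * s M \<le> invariant_mass / \<nu> i" .
  then have "s M \<le> (invariant_mass / \<nu> i) / real (Suc M)"
    by (simp only: pos_le_divide_eq[OF of_nat_0_less_iff[THEN iffD2, OF zero_less_Suc]] mult.commute)
  then show ?thesis
    using taboo_mass_identity[of M] by (simp add: s_def)
qed

lemma taboo_cost_return_bound: "(\<Sum>n\<le>N. taboo_cost P w K i n i) \<le> invariant_cost / \<nu> i"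
proof -
  define E where "E n = (\<Sum>y\<in>K - {i}. taboo_cost P w K i n y)" for n
  have step: "taboo_cost P w K i (Suc n) i + E (Suc n) \<le> E n + (\<Sum>x\<in>K - {i}. taboo_prob P K i n x * w x)" for n
  proof -
    have "taboo_cost P w K i (Suc n) i + E (Suc n) = (\<Sum>y\<in>K. taboo_cost P w K i (Suc n) y)"
      using sum_K_remove[of "taboo_cost P w K i (Suc n)"]
      by (simp add: E_def)
    also have "\<dots> = (\<Sum>x\<in>K - {i}. (taboo_cost P w K i n x + taboo_prob P K i n x * w x) * (\<Sum>y\<in>K. P x y))"
      by (simp add: taboo_cost_Suc sum.swap[of _ K] sum_distrib_left)
    also have "\<dots> \<le> (\<Sum>x\<in>K - {i}. taboo_cost P w K i n x + taboo_prob P K i n x * w x)"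
      by (intro sum_mono mult_right_le_one_le add_nonneg_nonneg mult_nonneg_nonneg taboo_cost_nonneg
          taboo_prob_nonneg w_nonneg row_sum_le_1 finite_reachable sum_nonneg P_nonneg)
    finally show ?thesis
      by (simp add: E_def sum.distrib)
  qed
  have accumulated: "(\<Sum>n<N'. taboo_cost P w K i (Suc n) i) + E N'
      \<le> (\<Sum>n<N'. \<Sum>x\<in>K - {i}. taboo_prob P K i n x * w x)" for N'
  proof (induction N')
    case (Suc N')
    then show ?case
      using step[of N'] by simp
  qed (simp add: E_def taboo_cost_0)
  moreover have "(\<Sum>n<N. \<Sum>x\<in>K - {i}. taboo_prob P K i n x * w x) \<le> invariant_cost / \<nu> i"
  proof -
    have "(\<Sum>n<N. \<Sum>x\<in>K - {i}. taboo_prob P K i n x * w x) = (\<Sum>x\<in>K - {i}. w x * (\<Sum>n<N. taboo_prob P K i n x))"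
      by (simp add: sum.swap[of _ "{..<N}"] sum_distrib_left mult.commute)
    also have "\<dots> \<le> (\<Sum>x\<in>K. w x * (\<Sum>n<N. taboo_prob P K i n x))"
      by (intro sum_mono2 finite_reachable mult_nonneg_nonneg w_nonneg sum_nonneg taboo_prob_nonneg) auto
    also have "\<dots> \<le> invariant_cost / \<nu> i"
      by (rule sum_taboo_visits_le(1)[OF finite_reachable])
    finally show ?thesis .
  qed
  moreover have "0 \<le> E N"
    unfolding E_def by (intro sum_nonneg taboo_cost_nonneg)
  moreover have "(\<Sum>n\<le>N. taboo_cost P w K i n i) = (\<Sum>n<N. taboo_cost P w K i (Suc n) i)"
    unfolding lessThan_Suc_atMost[symmetric] sum.lessThan_Suc_shift by (simp add: taboo_cost_0)
  ultimately show ?thesis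
    using accumulated[of N] by linarith
qed

end

lemma return_prob_eq_1: "infsum (\<lambda>xs. ennreal (path_prob P (i # xs @ [i]))) excursions = 1"
proof (rule antisym)
  have "infsum (\<lambda>xs. ennreal (path_prob P (i # xs @ [i]))) excursions \<le> ennreal 1"
  proof (rule infsum_excursions_le)
    show "(\<Sum>xs\<in>short_excursions M. path_prob P (i # xs @ [i])) \<le> 1" for M
      using return_taboo_prob_le_1[OF finite_reachable] by (simp add: sum_short_excursions taboo_prob_def)
  qed (auto intro: path_prob_nonneg P_nonneg)
  then show "infsum (\<lambda>xs. ennreal (path_prob P (i # xs @ [i]))) excursions \<le> 1"
    by simp
  show "1 \<le> infsum (\<lambda>xs. ennreal (path_prob P (i # xs @ [i]))) excursions"
  proof (rule ennreal_one_le_of_lower_bounds)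
    fix M
    have "ennreal (1 - (invariant_mass / \<nu> i) / real (Suc M)) \<le> ennreal (\<Sum>xs\<in>short_excursions M. path_prob P (i # xs @ [i]))"
      using return_prob_lower_bound[of M] by (intro ennreal_leI) (simp add: sum_short_excursions taboo_prob_def)
    also have "\<dots> \<le> infsum (\<lambda>xs. ennreal (path_prob P (i # xs @ [i]))) excursions"
      by (rule sum_short_excursions_le_infsum) (auto intro: path_prob_nonneg P_nonneg)
    finally show "ennreal (1 - (invariant_mass / \<nu> i) / real (Suc M)) \<le> \<dots>" .
  qed
qed

lemma expected_return_time_finite:
  "infsum (\<lambda>xs. ennreal (path_prob P (i # xs @ [i]) * sum_list (map w (i # xs)))) excursions < top"
proof -
  have "infsum (\<lambda>xs. ennreal (path_prob P (i # xs @ [i]) * sum_list (map w (i # xs)))) excursions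
      \<le> ennreal (w i + invariant_cost / \<nu> i)"
  proof (rule infsum_excursions_le)
    fix M
    have "(\<Sum>xs\<in>short_excursions M. path_prob P (i # xs @ [i]) * sum_list (map w (i # xs)))
        = w i * (\<Sum>n\<le>M. taboo_prob P (K M) i n i) + (\<Sum>n\<le>M. taboo_cost P w (K M) i n i)"
      by (simp add: sum_short_excursions taboo_prob_def taboo_cost_def sum_distrib_left sum.distrib
          algebra_simps)
    also have "\<dots> \<le> w i * 1 + invariant_cost / \<nu> i"
      by (intro add_mono mult_left_mono return_taboo_prob_le_1 finite_reachable taboo_cost_return_bound w_nonneg)
    finally show "(\<Sum>xs\<in>short_excursions M. path_prob P (i # xs @ [i]) * sum_list (map w (i # xs)))
        \<le> w i + invariant_cost / \<nu> i"
      by simp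
  qed (auto intro!: mult_nonneg_nonneg add_nonneg_nonneg path_prob_nonneg P_nonneg sum_list_nonneg w_nonneg)
  then show ?thesis
    using order.strict_trans1 by fastforce
qed

end

text \<open>The jump chain has the finite invariant measure \<open>\<pi> q\<^sub>o\<^sub>u\<^sub>t\<close>, and the holding times
  \<open>1 / q\<^sub>o\<^sub>u\<^sub>t\<close> have finite \<open>\<pi> q\<^sub>o\<^sub>u\<^sub>t\<close>-mean.\<close>

lemma ctmc_pos_recurrent_if_stationary:
  fixes q :: "'s \<Rightarrow> 's \<Rightarrow> real" and \<pi> :: "'s \<Rightarrow> real"
  assumes q_nonneg: "\<And>x y. 0 \<le> q x y"
    and q_finite_support: "\<And>x. finite {y. q x y \<noteq> 0}"
    and q_out: "\<And>x. (q x has_sum ctmc_qout UNIV q x) (UNIV - {x})"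
    and q_out_pos: "\<And>x. 0 < ctmc_qout UNIV q x"
    and stationary: "ctmc_stationary UNIV q \<pi>"
    and \<pi>_pos: "\<And>x. 0 < \<pi> x"
    and flow_summable: "(\<lambda>x. \<pi> x * ctmc_qout UNIV q x) summable_on UNIV"
  shows "ctmc_pos_recurrent UNIV q i"
proof -
  let ?P = "ctmc_jump UNIV q" and ?\<nu> = "\<lambda>x. \<pi> x * ctmc_qout UNIV q x"
  interpret invariant_measure_chain ?P ?\<nu> "\<lambda>x. 1 / ctmc_qout UNIV q x" i
  proof
    show "0 \<le> ?P x y" for x y
      using q_nonneg[of x y] q_out_pos[of x] by (simp add: ctmc_jump_def)
    show "finite {y. ?P x y \<noteq> 0}" for x
      by (rule finite_subset[OF _ q_finite_support[of x]]) (auto simp: ctmc_jump_def)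
    show "(?P x has_sum 1) UNIV" for x
    proof -
      have "((\<lambda>y. q x y / ctmc_qout UNIV q x) has_sum 1) (UNIV - {x})"
        using has_sum_divide_const[OF q_out[of x], of "ctmc_qout UNIV q x"] q_out_pos[of x] by simp
      also have "?this \<longleftrightarrow> (?P x has_sum 1) UNIV"
        by (rule has_sum_cong_neutral) (auto simp: ctmc_jump_def)
      finally show ?thesis .
    qed
    show "0 \<le> ?\<nu> x" for x
      using \<pi>_pos[of x] q_out_pos[of x] by simp
    show "?\<nu> summable_on UNIV"
      by (rule flow_summable)
    show "((\<lambda>x. ?\<nu> x * ?P x y) has_sum ?\<nu> y) UNIV" for y
    proof -
      have "((\<lambda>x. \<pi> x * q x y) has_sum ?\<nu> y) (UNIV - {y})"
        using stationary by (simp add: ctmc_stationary_def)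
      also have "?this \<longleftrightarrow> ((\<lambda>x. ?\<nu> x * ?P x y) has_sum ?\<nu> y) UNIV"
        by (rule has_sum_cong_neutral) (auto simp: ctmc_jump_def q_out_pos[THEN less_imp_neq, THEN not_sym])
      finally show ?thesis .
    qed
    show "0 < ?\<nu> i"
      using \<pi>_pos[of i] q_out_pos[of i] by simp
    show "0 \<le> 1 / ctmc_qout UNIV q x" for x
      using q_out_pos[of x] by simp
    show "(\<lambda>x. ?\<nu> x * (1 / ctmc_qout UNIV q x)) summable_on UNIV"
      using stationary unfolding ctmc_stationary_def
      by (auto simp: q_out_pos[THEN less_imp_neq, THEN not_sym] intro: has_sum_imp_summable)
  qed
  show ?thesis
    using return_prob_eq_1 expected_return_time_finite
    by (simp add: ctmc_pos_recurrent_def ctmc_return_prob_def ctmc_return_time_def)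
qed

section \<open>Irreducibility and frozen coordinates\<close>

lemma ctmc_irreducible_mono:
  assumes "ctmc_irreducible S q'" and "\<And>x y. q' x y > 0 \<Longrightarrow> q x y > 0"
  shows "ctmc_irreducible S q"
proof -
  have "{(x, y). x \<in> S \<and> y \<in> S \<and> x \<noteq> y \<and> q' x y > 0} \<subseteq> {(x, y). x \<in> S \<and> y \<in> S \<and> x \<noteq> y \<and> q x y > 0}"
    using assms(2) by auto
  then show ?thesis
    using assms(1) rtrancl_mono unfolding ctmc_irreducible_def by blast
qed

lemma ctmc_closed_frozen_coordinates:
  assumes "\<And>n m j. j \<in> B \<Longrightarrow> m j \<noteq> n j \<Longrightarrow> q n m = 0"
  shows "ctmc_closed UNIV q {n. \<forall>j\<in>B. n j = b j}"
  unfolding ctmc_closed_def using assms by force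

lemma not_ctmc_irreducible_frozen_coordinates:
  fixes q :: "('j \<Rightarrow> nat) \<Rightarrow> ('j \<Rightarrow> nat) \<Rightarrow> real"
  assumes frozen: "\<And>n m j. j \<in> B \<Longrightarrow> m j \<noteq> n j \<Longrightarrow> q n m = 0" and "b \<in> B"
  shows "\<not> ctmc_irreducible UNIV q"
proof
  assume "ctmc_irreducible UNIV q"
  then have "((\<lambda>_. 0), (\<lambda>_. 0)(b := 1)) \<in> {(x, y). x \<in> UNIV \<and> y \<in> UNIV \<and> x \<noteq> y \<and> q x y > 0}\<^sup>*"
    by (simp add: ctmc_irreducible_def)
  then have "((\<lambda>_. 0)(b := 1)) b = (0::nat)"
  proof (induction rule: rtrancl_induct)
    case (step y z)
    then have "z b = y b"
      using frozen[OF \<open>b \<in> B\<close>, of z y] by auto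
    with step.IH show ?case
      by simp
  qed simp
  then show False
    by simp
qed

lemma infinite_coordinate_slices:
  assumes "b \<in> B"
  shows "infinite ((\<lambda>c::'j \<Rightarrow> nat. {n. \<forall>j\<in>B. n j = c j}) ` UNIV)"
proof
  let ?slice = "\<lambda>c::'j \<Rightarrow> nat. {n. \<forall>j\<in>B. n j = c j}"
  assume "finite (?slice ` UNIV)"
  moreover have "(\<lambda>t::nat. ?slice (\<lambda>_. t)) ` UNIV \<subseteq> ?slice ` UNIV"
    by auto
  moreover have "inj (\<lambda>t::nat. ?slice (\<lambda>_. t))"
  proof (rule injI)
    fix t t' :: nat
    assume "?slice (\<lambda>_. t) = ?slice (\<lambda>_. t')"
    then have "(\<lambda>_. t) \<in> ?slice (\<lambda>_. t')"
      by auto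
    then show "t = t'"
      using assms by auto
  qed
  ultimately show False
    by (meson finite_imageD finite_subset infinite_UNIV_nat)
qed

section \<open>The modified network\<close>

text \<open>The weights \<open>\<alpha>\<close> and \<open>\<beta>\<close> only need \<open>\<beta> \<alpha>\<^sub>j = \<gamma>\<^sub>j\<close>, \<open>0 \<le> \<alpha> \<le> 1\<close> and
  \<open>\<alpha>\<^sub>0 = 1\<close>; the normalisation by \<open>max \<gamma>\<close> in the theorem is one such choice.\<close>

locale jackson_skipping =
  fixes r :: "real^'j::finite option^'j option" and lam :: real and \<eta> :: "'j option \<Rightarrow> real"
    and \<mu> :: "'j \<Rightarrow> nat \<Rightarrow> real" and \<gamma> :: "'j \<Rightarrow> real" and \<alpha> :: "'j option \<Rightarrow> real" and \<beta> :: real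
  assumes r_nonneg: "\<And>i k. 0 \<le> r$i$k"
    and r_stochastic: "\<And>i. (\<Sum>k\<in>UNIV. r$i$k) = 1"
    and r_irreducible: "\<And>i k. (i, k) \<in> {(a, b). r$a$b > 0}\<^sup>*"
    and lam_pos: "0 < lam"
    and eta_None: "\<eta> None = lam"
    and eta_traffic: "\<And>k. \<eta> k = (\<Sum>i\<in>UNIV. \<eta> i * r$i$k)"
    and mu_pos: "\<And>j k. 0 < k \<Longrightarrow> 0 < \<mu> j k"
    and C_finite: "\<And>j. summable (\<lambda>n. \<Prod>k\<in>{1..n}. \<eta> (Some j) / \<mu> j k)"
    and gamma_nonneg: "\<And>j. 0 \<le> \<gamma> j"
    and alpha_nonneg: "\<And>i. 0 \<le> \<alpha> i"
    and alpha_le_1: "\<And>i. \<alpha> i \<le> 1"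
    and alpha_None: "\<alpha> None = 1"
    and beta_pos: "0 < \<beta>"
    and beta_alpha: "\<And>j. \<beta> * \<alpha> (Some j) = \<gamma> j"
begin

sublocale skip: randomized_skipping r \<alpha> None
  by unfold_locales (simp_all add: r_nonneg r_stochastic r_irreducible alpha_nonneg alpha_le_1 alpha_None)

abbreviation modified_rate :: "('j \<Rightarrow> nat) \<Rightarrow> ('j \<Rightarrow> nat) \<Rightarrow> real" where
  "modified_rate \<equiv> jackson_rate (\<lambda>i. \<beta> * lam * skip_matrix r \<alpha> $ None $ Some i) (\<lambda>j k. \<gamma> j * \<mu> j k)
     (skip_matrix r \<alpha>)"

lemma eta_pos: "0 < \<eta> k"
  using traffic_solution_pos[OF r_nonneg r_stochastic r_irreducible eta_traffic, of None]
  by (simp add: eta_None lam_pos)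

lemma jackson_factor_has_sum_pos:
  "(jackson_factor \<eta> \<mu> j has_sum 1) UNIV" "0 \<le> jackson_factor \<eta> \<mu> j k" "0 < jackson_factor \<eta> \<mu> j k"
proof -
  have "0 \<le> \<eta> (Some j)"
    using eta_pos[of "Some j"] by simp
  note distribution = jackson_factor_distribution[where \<eta>=\<eta> and \<mu>=\<mu> and j=j, OF this mu_pos C_finite]
  show "(jackson_factor \<eta> \<mu> j has_sum 1) UNIV" "0 \<le> jackson_factor \<eta> \<mu> j k"
    using distribution by blast+
  show "0 < jackson_factor \<eta> \<mu> j k"
    unfolding jackson_factor_def using distribution(3) mu_pos eta_pos[of "Some j"]
    by (intro divide_pos_pos prod_pos) auto
qed

lemma jackson_factor_local_balance:
  "jackson_factor \<eta> \<mu> j (k + 1) * (\<gamma> j * \<mu> j (k + 1)) = \<gamma> j * \<eta> (Some j) * jackson_factor \<eta> \<mu> j k"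
  using jackson_factor_Suc[of \<mu> j k \<eta>] mu_pos[of "Suc k" j] by (simp add: mult_ac)

lemma modified_throughput_traffic:
  "\<beta> * \<eta> k * \<alpha> k = (\<Sum>i\<in>UNIV. \<beta> * \<eta> i * \<alpha> i * skip_matrix r \<alpha> $ i $ k)"
proof -
  have "(\<Sum>i\<in>UNIV. \<beta> * \<eta> i * \<alpha> i * skip_matrix r \<alpha> $ i $ k)
      = \<beta> * (\<Sum>i\<in>UNIV. \<eta> i * \<alpha> i * skip_matrix r \<alpha> $ i $ k)"
    by (simp add: sum_distrib_left mult.assoc)
  then show ?thesis
    using skip.skip_matrix_traffic[OF eta_traffic, of k] by simp
qed

text \<open>The coordinates in \<open>B\<close> are distributed according to \<open>\<phi>\<close>, a law on the states
  vanishing outside \<open>B\<close>; the others follow the Jackson product form.\<close>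

definition product_form :: "'j set \<Rightarrow> (('j \<Rightarrow> nat) \<Rightarrow> real) \<Rightarrow> ('j \<Rightarrow> nat) \<Rightarrow> real" where
  "product_form B \<phi> n = (\<Prod>j\<in>UNIV - B. jackson_factor \<eta> \<mu> j (n j)) * \<phi> (\<lambda>j. if j \<in> B then n j else 0)"

lemma product_form_local_balance:
  assumes B: "\<And>j. j \<in> B \<Longrightarrow> \<gamma> j = 0"
  shows "product_form B \<phi> (n(j := n j + 1)) * (\<gamma> j * \<mu> j (n j + 1))
    = \<beta> * \<eta> (Some j) * \<alpha> (Some j) * product_form B \<phi> n"
proof (cases "j \<in> B")
  case False
  define R where "R = (\<Prod>k\<in>UNIV - B - {j}. jackson_factor \<eta> \<mu> k (n k))"
  define \<Phi> where "\<Phi> = \<phi> (\<lambda>k. if k \<in> B then n k else 0)"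
  have "(\<Prod>k\<in>UNIV - B. jackson_factor \<eta> \<mu> k ((n(j := n j + 1)) k)) = jackson_factor \<eta> \<mu> j (n j + 1) * R"
    and "(\<Prod>k\<in>UNIV - B. jackson_factor \<eta> \<mu> k (n k)) = jackson_factor \<eta> \<mu> j (n j) * R"
    using False by (simp_all add: prod.remove R_def)
  moreover have "(\<lambda>k. if k \<in> B then (n(j := n j + 1)) k else 0) = (\<lambda>k. if k \<in> B then n k else 0)"
    using False by auto
  ultimately have up: "product_form B \<phi> (n(j := n j + 1)) = jackson_factor \<eta> \<mu> j (n j + 1) * R * \<Phi>"
    and here: "product_form B \<phi> n = jackson_factor \<eta> \<mu> j (n j) * R * \<Phi>"
    unfolding product_form_def \<Phi>_def by simp_all
  have balance: "jackson_factor \<eta> \<mu> j (n j + 1) * (\<gamma> j * \<mu> j (n j + 1))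
      = \<beta> * \<eta> (Some j) * \<alpha> (Some j) * jackson_factor \<eta> \<mu> j (n j)"
    using jackson_factor_local_balance[of j "n j"] unfolding beta_alpha[of j, symmetric] by (simp only: mult_ac)
  have "product_form B \<phi> (n(j := n j + 1)) * (\<gamma> j * \<mu> j (n j + 1))
      = (jackson_factor \<eta> \<mu> j (n j + 1) * (\<gamma> j * \<mu> j (n j + 1))) * (R * \<Phi>)"
    unfolding up by (simp only: mult_ac)
  also have "\<dots> = \<beta> * \<eta> (Some j) * \<alpha> (Some j) * product_form B \<phi> n"
    unfolding balance here by (simp only: mult_ac)
  finally show ?thesis .
next
  case True
  then have "\<alpha> (Some j) = 0"
    using B[of j] beta_alpha[of j] beta_pos by simp
  then show ?thesis
    using True B by (simp add: product_form_def)
qed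

lemma product_form_has_sum:
  assumes \<phi>_nonneg: "\<And>c. 0 \<le> \<phi> c" and \<phi>_sum: "(\<phi> has_sum 1) {c. \<forall>j. j \<notin> B \<longrightarrow> c j = 0}"
  shows "(product_form B \<phi> has_sum 1) UNIV"
proof -
  have domain: "{c. \<forall>j\<in>UNIV - B. c j = 0} = {c. \<forall>j. j \<notin> B \<longrightarrow> c j = 0}"
    by auto
  have "(\<phi> has_sum 1) {c. \<forall>j\<in>UNIV - B. c j = 0}"
    unfolding domain by (rule \<phi>_sum)
  then have "((\<lambda>n. (\<Prod>j\<in>UNIV - B. jackson_factor \<eta> \<mu> j (n j)) * \<phi> (\<lambda>j. if j \<in> UNIV - B then 0 else n j))
      has_sum 1) UNIV"
    using \<phi>_nonneg
    by (intro has_sum_prod_factors[where f="jackson_factor \<eta> \<mu>"] jackson_factor_has_sum_pos) auto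
  moreover have "(\<lambda>j. if j \<in> UNIV - B then 0 else n j) = (\<lambda>j. if j \<in> B then n j else 0)" for n :: "'j \<Rightarrow> nat"
    by auto
  ultimately show ?thesis
    by (simp add: product_form_def[abs_def])
qed

lemma modified_stationary:
  assumes "\<And>j. j \<in> B \<Longrightarrow> \<gamma> j = 0"
    and "\<And>c. 0 \<le> \<phi> c" and "(\<phi> has_sum 1) {c. \<forall>j. j \<notin> B \<longrightarrow> c j = 0}"
  shows "ctmc_stationary UNIV modified_rate (product_form B \<phi>)"
proof (rule jackson_stationaryI[where \<theta>="\<lambda>k. \<beta> * \<eta> k * \<alpha> k"])
  show "product_form B \<phi> (n(j := n j + 1)) * (\<gamma> j * \<mu> j (n j + 1))
      = \<beta> * \<eta> (Some j) * \<alpha> (Some j) * product_form B \<phi> n" for n j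
    by (rule product_form_local_balance[OF assms(1)])
  show "\<beta> * lam * skip_matrix r \<alpha> $ None $ Some i = \<beta> * \<eta> None * \<alpha> None * skip_matrix r \<alpha> $ None $ Some i" for i
    by (simp add: eta_None alpha_None)
  show "\<beta> * \<eta> k * \<alpha> k = (\<Sum>i\<in>UNIV. \<beta> * \<eta> i * \<alpha> i * skip_matrix r \<alpha> $ i $ k)" for k
    by (rule modified_throughput_traffic)
  show "(\<Sum>l\<in>UNIV. skip_matrix r \<alpha> $ k $ l) = 1" for k
    by (rule skip.skip_matrix_stochastic)
  show "0 \<le> product_form B \<phi> n" for n
    unfolding product_form_def by (intro mult_nonneg_nonneg prod_nonneg jackson_factor_has_sum_pos assms(2))
  show "(product_form B \<phi> has_sum 1) UNIV"
    by (rule product_form_has_sum[OF assms(2,3)])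
qed

lemma modified_rate_frozen:
  assumes "\<gamma> j = 0" "m j \<noteq> n j"
  shows "modified_rate n m = 0"
proof (rule jackson_rate_frozen[where B="{j. \<gamma> j = 0}"])
  show "\<beta> * lam * skip_matrix r \<alpha> $ None $ Some i = 0" if "i \<in> {j. \<gamma> j = 0}" for i
    using that beta_alpha[of i] beta_pos by (simp add: skip.skip_matrix_eq_0)
  show "skip_matrix r \<alpha> $ Some j' $ Some i = 0" if "i \<in> {j. \<gamma> j = 0}" for j' i
    using that beta_alpha[of i] beta_pos by (simp add: skip.skip_matrix_eq_0)
qed (use assms in auto)

lemma product_form_empty: "product_form {} (\<lambda>_. 1) = (\<lambda>n. \<Prod>j\<in>UNIV. jackson_factor \<eta> \<mu> j (n j))"
  by (simp add: product_form_def[abs_def])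

lemma modified_stationary_product:
  "ctmc_stationary UNIV modified_rate (\<lambda>n. \<Prod>j\<in>UNIV. jackson_factor \<eta> \<mu> j (n j))"
proof -
  have "{c::'j \<Rightarrow> nat. \<forall>j. j \<notin> {} \<longrightarrow> c j = 0} = {\<lambda>_. 0}"
    by auto
  then have "((\<lambda>_. 1 :: real) has_sum 1) {c::'j \<Rightarrow> nat. \<forall>j. j \<notin> {} \<longrightarrow> c j = 0}"
    by (simp add: has_sum_finiteI)
  from modified_stationary[OF _ _ this] show ?thesis
    by (simp add: product_form_empty)
qed

lemma modified_rate_nonneg: "0 \<le> modified_rate n m"
  by (rule jackson_rate_nonneg)
    (auto intro!: mult_nonneg_nonneg skip.skip_matrix_nonneg less_imp_le[OF mu_pos]
      simp: gamma_nonneg less_imp_le[OF beta_pos] less_imp_le[OF lam_pos])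

lemma modified_out_rate_pos:
  assumes r_00: "r$None$None = 0" and gamma_pos: "\<And>j. 0 < \<gamma> j"
  shows "0 < ctmc_qout UNIV modified_rate n"
proof -
  have "(\<Sum>i\<in>UNIV. r$None$Some i) = 1"
    using r_stochastic[of None] r_00 by (simp add: sum_UNIV_option)
  then obtain i where "r$None$Some i \<noteq> 0"
    by (metis sum.neutral zero_neq_one)
  then have "0 < r$None$Some i"
    using r_nonneg[of None "Some i"] by simp
  moreover have "0 < \<alpha> (Some i)"
    using beta_alpha[of i] gamma_pos[of i] beta_pos by (metis zero_less_mult_pos)
  ultimately have "0 < \<beta> * lam * (r$None$Some i * \<alpha> (Some i))"
    using beta_pos lam_pos by simp
  also have "\<dots> \<le> \<beta> * lam * skip_matrix r \<alpha> $ None $ Some i"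
    using skip.skip_matrix_ge beta_pos lam_pos by simp
  also have "\<dots> \<le> (\<Sum>i\<in>UNIV. \<beta> * lam * skip_matrix r \<alpha> $ None $ Some i)"
    by (rule member_le_sum)
      (auto intro!: mult_nonneg_nonneg skip.skip_matrix_nonneg simp: less_imp_le[OF beta_pos] less_imp_le[OF lam_pos])
  also have "\<dots> \<le> ctmc_qout UNIV modified_rate n"
    unfolding ctmc_qout_jackson_rate jackson_out_rate_def
    by (auto intro!: add_nonneg_nonneg sum_nonneg mult_nonneg_nonneg skip.skip_matrix_nonneg
        less_imp_le[OF mu_pos] simp: gamma_nonneg)
  finally show ?thesis .
qed

lemma modified_rate_dominates:
  assumes gamma_pos: "\<And>j. 0 < \<gamma> j"
  obtains \<kappa> where "0 < \<kappa>" "\<And>n m. \<kappa> * jackson_rate (\<lambda>i. lam * r$None$Some i) \<mu> r n m \<le> modified_rate n m"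
proof
  have alpha_pos: "0 < \<alpha> (Some i)" for i
    using beta_alpha[of i] gamma_pos[of i] beta_pos by (metis zero_less_mult_pos)
  define \<kappa> where "\<kappa> = Min ((\<lambda>i. \<beta> * \<alpha> (Some i)) ` UNIV \<union> (\<lambda>(j, i). \<gamma> j * \<alpha> (Some i)) ` UNIV \<union> range \<gamma>)"
  show "0 < \<kappa>"
    unfolding \<kappa>_def using beta_pos alpha_pos gamma_pos by (subst Min_gr_iff) auto
  have \<kappa>_arrival: "\<kappa> \<le> \<beta> * \<alpha> (Some i)" and \<kappa>_move: "\<kappa> \<le> \<gamma> j * \<alpha> (Some i)" and \<kappa>_departure: "\<kappa> \<le> \<gamma> j" for i j
    unfolding \<kappa>_def by (auto intro!: Min_le simp: image_iff)
  show "\<kappa> * jackson_rate (\<lambda>i. lam * r$None$Some i) \<mu> r n m \<le> modified_rate n m" for n m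
  proof (rule jackson_rate_mono)
    show "0 \<le> \<kappa>"
      using \<open>0 < \<kappa>\<close> by simp
    show "\<kappa> * (lam * r$None$Some i) \<le> \<beta> * lam * skip_matrix r \<alpha> $ None $ Some i" for i
    proof -
      have "\<kappa> * (lam * r$None$Some i) \<le> (\<beta> * \<alpha> (Some i)) * (lam * r$None$Some i)"
        using \<kappa>_arrival lam_pos r_nonneg by (intro mult_right_mono) auto
      also have "\<dots> \<le> \<beta> * lam * skip_matrix r \<alpha> $ None $ Some i"
        using skip.skip_matrix_ge[of None "Some i"] beta_pos lam_pos
        by (simp add: mult_ac mult_left_mono)
      finally show ?thesis .
    qed
    show "\<kappa> * (\<mu> j k * r$Some j$Some i) \<le> \<gamma> j * \<mu> j k * skip_matrix r \<alpha> $ Some j $ Some i" if "0 < k" for j k i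
    proof -
      have "\<kappa> * (\<mu> j k * r$Some j$Some i) \<le> (\<gamma> j * \<alpha> (Some i)) * (\<mu> j k * r$Some j$Some i)"
        using \<kappa>_move less_imp_le[OF mu_pos[OF that]] r_nonneg by (intro mult_right_mono mult_nonneg_nonneg) auto
      also have "\<dots> \<le> \<gamma> j * \<mu> j k * skip_matrix r \<alpha> $ Some j $ Some i"
        using skip.skip_matrix_ge[of "Some j" "Some i"] gamma_nonneg[of j] mu_pos[OF that]
        by (simp add: mult_ac mult_left_mono)
      finally show ?thesis .
    qed
    show "\<kappa> * (\<mu> j k * r$Some j$None) \<le> \<gamma> j * \<mu> j k * skip_matrix r \<alpha> $ Some j $ None" if "0 < k" for j k
    proof -
      have "\<kappa> * (\<mu> j k * r$Some j$None) \<le> \<gamma> j * (\<mu> j k * r$Some j$None)"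
        using \<kappa>_departure less_imp_le[OF mu_pos[OF that]] r_nonneg by (intro mult_right_mono mult_nonneg_nonneg) auto
      also have "\<dots> \<le> \<gamma> j * \<mu> j k * skip_matrix r \<alpha> $ Some j $ None"
        using skip.skip_matrix_ge[of "Some j" None] gamma_nonneg[of j] mu_pos[OF that] alpha_None
        by (simp add: mult_ac mult_left_mono)
      finally show ?thesis .
    qed
  qed
qed

lemma modified_ergodic:
  assumes r_00: "r$None$None = 0" and gamma_pos: "\<And>j. 0 < \<gamma> j"
    and irreducible: "ctmc_irreducible UNIV (jackson_rate (\<lambda>i. lam * r$None$Some i) \<mu> r)"
  shows "ctmc_ergodic UNIV modified_rate"
proof -
  obtain \<kappa> where "0 < \<kappa>" and dominates: "\<And>n m. \<kappa> * jackson_rate (\<lambda>i. lam * r$None$Some i) \<mu> r n m \<le> modified_rate n m"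
    using modified_rate_dominates gamma_pos by blast
  have "ctmc_irreducible UNIV modified_rate"
    using irreducible
  proof (rule ctmc_irreducible_mono)
    show "0 < modified_rate n m" if "0 < jackson_rate (\<lambda>i. lam * r$None$Some i) \<mu> r n m" for n m
      using dominates[of n m] mult_pos_pos[OF \<open>0 < \<kappa>\<close> that] by linarith
  qed
  moreover have "ctmc_pos_recurrent UNIV modified_rate i" for i
  proof (rule ctmc_pos_recurrent_if_stationary[OF modified_rate_nonneg _ _ _ modified_stationary_product])
    show "finite {m. modified_rate n m \<noteq> 0}" for n
      using jackson_rate_eq_0_outside_targets by (blast intro: finite_subset[OF _ finite_jackson_targets])
    show "(modified_rate n has_sum ctmc_qout UNIV modified_rate n) (UNIV - {n})" for n
      unfolding ctmc_qout_jackson_rate by (rule jackson_rate_has_sum_out)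
    show "0 < ctmc_qout UNIV modified_rate n" for n
      by (rule modified_out_rate_pos[OF r_00 gamma_pos])
    show "0 < (\<Prod>j\<in>UNIV. jackson_factor \<eta> \<mu> j (n j))" for n
      by (intro prod_pos jackson_factor_has_sum_pos)
    have "(\<lambda>n. \<Prod>j\<in>UNIV. jackson_factor \<eta> \<mu> j (n j)) (n(j := n j + 1)) * (\<gamma> j * \<mu> j (n j + 1))
        = \<beta> * \<eta> (Some j) * \<alpha> (Some j) * (\<lambda>n. \<Prod>j\<in>UNIV. jackson_factor \<eta> \<mu> j (n j)) n" for n j
      using product_form_local_balance[of "{}" "\<lambda>_. 1" n j] unfolding product_form_empty by simp
    moreover have "((\<lambda>n. \<Prod>j\<in>UNIV. jackson_factor \<eta> \<mu> j (n j)) has_sum 1) UNIV"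
      using modified_stationary_product by (simp add: ctmc_stationary_def)
    ultimately show "(\<lambda>n. (\<Prod>j\<in>UNIV. jackson_factor \<eta> \<mu> j (n j)) * ctmc_qout UNIV modified_rate n) summable_on UNIV"
      unfolding ctmc_qout_jackson_rate by (rule jackson_out_rate_summable)
  qed
  ultimately show ?thesis
    by (simp add: ctmc_ergodic_def)
qed

end

lemma speed_rescaling:
  fixes \<gamma> :: "'j::finite \<Rightarrow> real" and \<alpha> :: "'j option \<Rightarrow> real"
  assumes gamma_nonneg: "\<And>j. 0 \<le> \<gamma> j"
    and \<alpha>: "\<alpha> = (\<lambda>i. case i of None \<Rightarrow> 1
      | Some j \<Rightarrow> if Max (range \<gamma>) \<le> 1 then \<gamma> j else \<gamma> j / Max (range \<gamma>))"
    and \<beta>: "\<beta> = (if Max (range \<gamma>) \<le> 1 then 1 else Max (range \<gamma>))"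
  shows "0 \<le> \<alpha> i" "\<alpha> i \<le> 1" "\<alpha> None = 1" "0 < \<beta>" "\<beta> * \<alpha> (Some j) = \<gamma> j"
proof -
  define M where "M = Max (range \<gamma>)"
  have le_max: "\<gamma> j \<le> M" for j
    unfolding M_def by (rule Max_ge) auto
  then have "0 \<le> M"
    using gamma_nonneg order_trans by blast
  note \<alpha> = \<alpha>[folded M_def] and \<beta> = \<beta>[folded M_def]
  show "0 \<le> \<alpha> i" "\<alpha> None = 1"
    using gamma_nonneg \<open>0 \<le> M\<close> by (auto simp: \<alpha> split: option.split)
  show "\<alpha> i \<le> 1"
  proof (cases i)
    case (Some j)
    show ?thesis
      using le_max[of j] by (cases "M \<le> 1") (auto simp: \<alpha> Some divide_le_eq_1)
  qed (simp add: \<alpha>)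
  show "0 < \<beta>" "\<beta> * \<alpha> (Some j) = \<gamma> j"
    by (auto simp: \<alpha> \<beta>)
qed

theorem theorem3p5:
  fixes r :: "real^'j::finite option^'j option"
    and lamj :: "'j \<Rightarrow> real"
    and \<eta> :: "'j option \<Rightarrow> real"
    and \<mu> :: "'j \<Rightarrow> nat \<Rightarrow> real"
    and \<gamma> :: "'j \<Rightarrow> real"
  defines "lam \<equiv> (\<Sum>j\<in>UNIV. lamj j)"
  defines "\<xi> \<equiv> (\<lambda>n::'j \<Rightarrow> nat. \<Prod>j\<in>UNIV. jackson_factor \<eta> \<mu> j (n j))"
  defines "gnorm \<equiv> Max (range \<gamma>)"
  defines "\<alpha> \<equiv> (\<lambda>i::'j option. case i of None \<Rightarrow> 1
                   | Some j \<Rightarrow> (if gnorm \<le> 1 then \<gamma> j else \<gamma> j / gnorm))"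
  defines "\<beta> \<equiv> (if gnorm \<le> 1 then 1 else gnorm)"
  defines "ra \<equiv> skip_matrix r \<alpha>"
  defines "qg \<equiv> jackson_rate (\<lambda>i. \<beta> * lam * ra $ None $ Some i) (\<lambda>j k. \<gamma> j * \<mu> j k) ra"
  defines "B \<equiv> {j. \<gamma> j = 0}"
  defines "W \<equiv> UNIV - B"
  assumes lamj_nonneg: "\<forall>j. 0 \<le> lamj j"
    and lam_pos: "lam > 0"
    and r_nonneg: "\<forall>i k. 0 \<le> r $ i $ k"
    and r_stoch: "\<forall>i. (\<Sum>k\<in>UNIV. r $ i $ k) = 1"
    and r_irred: "\<forall>i k. (i, k) \<in> {(a, b). r $ a $ b > 0}\<^sup>*"
    and r_source: "\<forall>j. r $ None $ Some j = lamj j / lam"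
    and r_00: "r $ None $ None = 0"
    and eta_0: "\<eta> None = lam"
    and eta_traffic: "\<forall>k. \<eta> k = (\<Sum>i\<in>UNIV. \<eta> i * r $ i $ k)"
    and mu_pos: "\<forall>j k. k > 0 \<longrightarrow> \<mu> j k > 0"
    and C_fin: "\<forall>j. summable (\<lambda>n. \<Prod>k\<in>{1..n}. \<eta> (Some j) / \<mu> j k)"
    and X_ergodic: "ctmc_ergodic UNIV (jackson_rate (\<lambda>i. lam * r $ None $ Some i) \<mu> r)"
    and gamma_nonneg: "\<forall>j. 0 \<le> \<gamma> j"
  shows "ctmc_stationary UNIV qg \<xi>
       \<and> (B = {} \<longrightarrow> ctmc_ergodic UNIV qg)
       \<and> (B \<noteq> {} \<longrightarrow>
            \<not> ctmc_irreducible UNIV qg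
          \<and> (\<forall>b::'j \<Rightarrow> nat. ctmc_closed UNIV qg {n. \<forall>j\<in>B. n j = b j})
          \<and> infinite ((\<lambda>b::'j \<Rightarrow> nat. {n. \<forall>j\<in>B. n j = b j}) ` UNIV)
          \<and> (\<forall>\<phi> :: ('j \<Rightarrow> nat) \<Rightarrow> real.
                (\<forall>c. 0 \<le> \<phi> c) \<and> (\<phi> has_sum 1) {c. \<forall>j. j \<notin> B \<longrightarrow> c j = 0}
                \<longrightarrow> ctmc_stationary UNIV qg
                      (\<lambda>n. (\<Prod>j\<in>W. jackson_factor \<eta> \<mu> j (n j))
                           * \<phi> (\<lambda>j. if j \<in> B then n j else 0))))"
proof -
  have gamma_nonneg: "\<And>j. 0 \<le> \<gamma> j"
    using gamma_nonneg by blast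
  note weights = speed_rescaling[where \<gamma>=\<gamma> and \<alpha>=\<alpha> and \<beta>=\<beta>, folded gnorm_def,
      OF gamma_nonneg \<alpha>_def[THEN meta_eq_to_obj_eq] \<beta>_def[THEN meta_eq_to_obj_eq]]
  interpret jackson_skipping r lam \<eta> \<mu> \<gamma> \<alpha> \<beta>
    by unfold_locales
      (use r_nonneg r_stoch r_irred lam_pos eta_0 eta_traffic mu_pos C_fin gamma_nonneg weights in blast)+
  have qg: "qg = modified_rate"
    unfolding qg_def ra_def ..
  have frozen: "\<And>n m j. j \<in> B \<Longrightarrow> m j \<noteq> n j \<Longrightarrow> modified_rate n m = 0"
    unfolding B_def using modified_rate_frozen by blast
  show ?thesis
    unfolding qg \<xi>_def W_def
  proof (intro conjI impI allI)
    show "ctmc_stationary UNIV modified_rate (\<lambda>n. \<Prod>j\<in>UNIV. jackson_factor \<eta> \<mu> j (n j))"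
      by (rule modified_stationary_product)
    show "ctmc_ergodic UNIV modified_rate" if "B = {}"
      using that X_ergodic gamma_nonneg
      by (intro modified_ergodic[OF r_00]) (auto simp: B_def less_le ctmc_ergodic_def)
    show "ctmc_stationary UNIV modified_rate
        (\<lambda>n. (\<Prod>j\<in>UNIV - B. jackson_factor \<eta> \<mu> j (n j)) * \<phi> (\<lambda>j. if j \<in> B then n j else 0))"
      if "(\<forall>c. 0 \<le> \<phi> c) \<and> (\<phi> has_sum 1) {c. \<forall>j. j \<notin> B \<longrightarrow> c j = 0}" for \<phi>
      using modified_stationary[of B \<phi>] that unfolding B_def product_form_def[abs_def] by blast
    show "ctmc_closed UNIV modified_rate {n. \<forall>j\<in>B. n j = c j}" for c :: "'j \<Rightarrow> nat"
      using frozen by (rule ctmc_closed_frozen_coordinates)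
    assume "B \<noteq> {}"
    then obtain b where "b \<in> B"
      by blast
    with frozen show "\<not> ctmc_irreducible UNIV modified_rate"
      by (rule not_ctmc_irreducible_frozen_coordinates)
    show "infinite ((\<lambda>c::'j \<Rightarrow> nat. {n. \<forall>j\<in>B. n j = c j}) ` UNIV)"
      using \<open>b \<in> B\<close> by (rule infinite_coordinate_slices)
  qed
qed

end
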